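(* Let $L>0$, $\delta\in\mathbb{R}$ and $k\in\mathbb{Z}\setminus\{0\}$. For $j=1,2$ let $u^{in}_j\in H^2_{\mathrm{per}}$ have spatial mean zero and satisfy $u^{in}_j(x+\tfrac{L}{k})=u^{in}_j(x)$ for a.e. $x\in\mathbb{R}$, and assume $\|u^{in}_1\|_{L^2}\neq\|u^{in}_2\|_{L^2}$. Let $u_j(x,t)$ be the solution, with $L$-periodic boundary conditions, of the Korteweg–de Vries equation $$u_t+uu_x+\delta^2u_{xxx}=0,\qquad u(x,0)=u^{in}_j(x).$$ Then: (i) $u_j(x+\tfrac{L}{k},t)=u_j(x,t)$ for a.e. $x\in\mathbb{R}$, for $j=1,2$ and all $t\in\mathbb{R}$; (ii) $P_Mu_1(\cdot,t)=P_Mu_2(\cdot,t)$ for every positive integer $M<|k|$ and every $t\in\mathbb{R}$; (iii) $\limsup_{t\to\infty}\|u_1(\cdot,t)-u_2(\cdot,t)\|_{L^2}>0$.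
   Context: $H^2_{\mathrm{per}}$ denotes the closure of the $L$-periodic trigonometric polynomials on $\mathbb{R}$ in the norm $\big(\sum_{j=0}^2\int_0^L|\partial_x^jf|^2dx\big)^{1/2}$; $L^2$ norms are over one period $[0,L]$. For a positive integer $M$, $P_M$ is the orthogonal projection onto the lowest $M$ Fourier modes, i.e. onto the span of $e^{i\frac{2\pi}{L}nx}$ with $|n|\le M$. The KdV equation is understood to be globally well-posed with unique solutions for such data. *)

theory Defs
  imports "HOL-Analysis.Analysis"
begin

definition freq :: "real \<Rightarrow> real" where
  "freq L = 2 * pi / L"

definition trig_poly :: "real \<Rightarrow> (real \<Rightarrow> complex) \<Rightarrow> bool" where
  "trig_poly L p \<longleftrightarrow> (\<exists>(N::nat) (a::int \<Rightarrow> complex).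
     \<forall>x. p x = (\<Sum>n\<in>{-int N..int N}. a n * exp (\<i> * complex_of_real (freq L * of_int n * x))))"

definition vderiv :: "(real \<Rightarrow> complex) \<Rightarrow> real \<Rightarrow> complex" where
  "vderiv g = (\<lambda>x. vector_derivative g (at x))"

definition h2norm :: "real \<Rightarrow> (real \<Rightarrow> complex) \<Rightarrow> real" where
  "h2norm L g = sqrt (\<Sum>j\<le>(2::nat). LINT x:{0..L}|lborel. (cmod ((vderiv ^^ j) g x))\<^sup>2)"

text \<open>p is a sequence of trigonometric polynomials, Cauchy in the H^2 norm,
  converging to f in L^2 over every window of length L (so that it determines
  f almost everywhere on all of R).\<close>
definition h2approx :: "real \<Rightarrow> (real \<Rightarrow> real) \<Rightarrow> (nat \<Rightarrow> real \<Rightarrow> complex) \<Rightarrow> bool" where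
  "h2approx L f p \<longleftrightarrow>
     (\<forall>m. trig_poly L (p m)) \<and>
     (\<forall>e>0. \<exists>N. \<forall>m\<ge>N. \<forall>n\<ge>N. h2norm L (\<lambda>x. p m x - p n x) < e) \<and>
     (\<forall>a::real. (\<lambda>m. \<integral>\<^sup>+ x. ennreal ((cmod (p m x - complex_of_real (f x)))\<^sup>2)
                        * indicator {a..a+L} x \<partial>lborel) \<longlonglongrightarrow> 0)"

text \<open>H^2_per: closure of the trigonometric polynomials in the H^2 norm
  (elements represented by a measurable real function).\<close>
definition H2per :: "real \<Rightarrow> (real \<Rightarrow> real) \<Rightarrow> bool" where
  "H2per L f \<longleftrightarrow> f \<in> borel_measurable borel \<and> (\<exists>p. h2approx L f p)"

definition l2norm :: "real \<Rightarrow> (real \<Rightarrow> real) \<Rightarrow> real" where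
  "l2norm L f = sqrt (LINT x:{0..L}|lborel. (f x)\<^sup>2)"

definition fourier_coeff :: "real \<Rightarrow> (real \<Rightarrow> real) \<Rightarrow> int \<Rightarrow> complex" where
  "fourier_coeff L f n = (LINT x:{0..L}|lborel.
      complex_of_real (f x) * exp (- (\<i> * complex_of_real (freq L * of_int n * x)))) / complex_of_real L"

definition proj :: "real \<Rightarrow> nat \<Rightarrow> (real \<Rightarrow> real) \<Rightarrow> real \<Rightarrow> complex" where
  "proj L M f x = (\<Sum>n\<in>{-int M..int M}. fourier_coeff L f n * exp (\<i> * complex_of_real (freq L * of_int n * x)))"

text \<open>Solutions u(x,t) of u_t + u u_x + delta^2 u_xxx = 0 with L-periodic boundary
  conditions: u(.,t) in H^2_per for all t, locally bounded in H^2 in time, and the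
  equation holds in the sense of distributions in x (tested against smooth
  L-periodic functions), classically in t:
  d/dt int_0^L u phi = int_0^L (u^2/2 phi' + delta^2 u phi''').\<close>
definition kdv_solution :: "real \<Rightarrow> real \<Rightarrow> (real \<Rightarrow> real \<Rightarrow> real) \<Rightarrow> bool" where
  "kdv_solution L \<delta> u \<longleftrightarrow>
     (\<forall>t. H2per L (\<lambda>x. u x t)) \<and>
     (\<forall>T::real. \<exists>B::real. \<forall>t\<in>{-T..T}. \<exists>p. h2approx L (\<lambda>x. u x t) p \<and> (\<forall>m. h2norm L (p m) \<le> B)) \<and>
     (\<forall>\<phi>::real \<Rightarrow> real. (\<forall>k x. ((deriv ^^ k) \<phi>) differentiable (at x)) \<longrightarrow> (\<forall>x. \<phi> (x + L) = \<phi> x) \<longrightarrow>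
        (\<forall>t. ((\<lambda>s. LINT x:{0..L}|lborel. u x s * \<phi> x) has_real_derivative
               (LINT x:{0..L}|lborel. (u x t)\<^sup>2 / 2 * deriv \<phi> x + \<delta>\<^sup>2 * u x t * (deriv ^^ 3) \<phi> x)) (at t)))"

end

theory Submission
  imports Defs
begin

text \<open>
  (i) The translate \<open>u (x + L/k) t\<close> of a solution is again a solution, and its initial datum
  agrees a.e. with that of \<open>u\<close>; uniqueness gives \<open>u (x + L/k) t = u x t\<close>.
  (ii) Translating by \<open>L/k\<close> multiplies the \<open>n\<close>-th Fourier coefficient by \<open>exp (2 pi i n / k)\<close>,
  which is not \<open>1\<close> for \<open>0 < |n| < |k|\<close>; so these coefficients of an \<open>L/k\<close>-periodic function
  vanish. The zeroth coefficient is the mean, which the equation conserves.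
  (iii) The \<open>L\<^sup>2\<close> norm is conserved, so \<open>l2norm (u1 - u2) \<ge> |l2norm uin1 - l2norm uin2| > 0\<close>
  at all times. For the weak solutions at hand conservation is proved through Fourier
  truncation: testing the equation with the \<open>n\<close>-th cosine and sine gives the evolution of the
  Fourier coefficients, so the truncated energy \<open>E\<^sub>N = \<Sum>|n|\<le>N. |u\<^sub>n|\<^sup>2\<close> has derivative
  \<open>Re \<integral> u\<^sup>2 \<partial>\<^sub>x P\<^sub>N u\<close>. This is \<open>O(1/N)\<close> uniformly on bounded time intervals by the \<open>H\<^sup>2\<close>
  bound, and \<open>E\<^sub>N\<close> tends to \<open>\<integral> u\<^sup>2\<close> by Parseval.
\<close>


definition fmode :: "real \<Rightarrow> int \<Rightarrow> real \<Rightarrow> complex" where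
  "fmode L n x = exp (\<i> * complex_of_real (freq L * of_int n * x))"

lemma fmode_add: "fmode L n (x + y) = fmode L n x * fmode L n y"
  unfolding fmode_def by (simp add: exp_add[symmetric] algebra_simps)

lemma fmode_mult: "fmode L n x * fmode L m x = fmode L (n + m) x"
  unfolding fmode_def by (simp add: exp_add[symmetric] algebra_simps)

lemma cnj_fmode: "cnj (fmode L n x) = fmode L (-n) x"
  unfolding fmode_def by (simp add: exp_cnj)

lemma exp_minus_eq_cnj_fmode: "exp (- (\<i> * complex_of_real (freq L * of_int n * x))) = cnj (fmode L n x)"
  unfolding fmode_def by (simp add: exp_cnj)

lemma norm_fmode[simp]: "cmod (fmode L n x) = 1"
  unfolding fmode_def by (simp add: norm_exp_i_times)

lemma fmode_0[simp]: "fmode L 0 x = 1"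
  unfolding fmode_def by simp

lemma fmode_periodic:
  assumes "L > 0" shows "fmode L n (x + L) = fmode L n x"
proof -
  have "freq L * of_int n * (x + L) = freq L * of_int n * x + 2 * real_of_int n * pi"
    using assms by (simp add: freq_def field_simps)
  hence "\<i> * complex_of_real (freq L * of_int n * (x + L)) = \<i> * complex_of_real (freq L * of_int n * x) + complex_of_real (2 * real_of_int n * pi) * \<i>"
    by (simp only: of_real_add distrib_left mult.commute)
  hence "fmode L n (x + L) = fmode L n x * exp (complex_of_real (2 * real_of_int n * pi) * \<i>)"
    unfolding fmode_def by (simp only: exp_add)
  also have "exp (complex_of_real (2 * real_of_int n * pi) * \<i>) = 1"
    by (rule exp_integer_2pi) simp
  finally show ?thesis by simp
qed

lemma fmode_has_vector_derivative:
  "((fmode L n) has_vector_derivative (\<i> * complex_of_real (freq L * of_int n)) * fmode L n x) (at x within S)"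
proof -
  have "((\<lambda>x. exp (x *\<^sub>R (\<i> * complex_of_real (freq L * of_int n)))) has_vector_derivative
        exp (x *\<^sub>R (\<i> * complex_of_real (freq L * of_int n))) * (\<i> * complex_of_real (freq L * of_int n))) (at x within S)"
    by (rule exp_scaleR_has_vector_derivative_right)
  moreover have "\<And>x. x *\<^sub>R (\<i> * complex_of_real (freq L * of_int n)) = \<i> * complex_of_real (freq L * of_int n * x)"
    by (simp add: scaleR_conv_of_real algebra_simps)
  ultimately show ?thesis unfolding fmode_def by (simp add: mult.commute)
qed

lemma continuous_on_fmode[continuous_intros]: "continuous_on S (fmode L n)"
  unfolding fmode_def by (intro continuous_intros)

lemma fmode_measurable[measurable]: "fmode L n \<in> borel_measurable borel"
  by (intro borel_measurable_continuous_onI continuous_on_fmode)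

lemma integral_fmode:
  assumes L: "L > 0"
  shows "(LINT x:{0..L}|lborel. fmode L n x) = (if n = 0 then complex_of_real L else 0)"
proof (cases "n = 0")
  case True
  then show ?thesis using L by (simp add: set_integral_const scaleR_conv_of_real)
next
  case False
  define c where "c = \<i> * complex_of_real (freq L * of_int n)"
  have c0: "c \<noteq> 0" using False L by (simp add: c_def freq_def)
  have D: "((\<lambda>x. fmode L n x / c) has_vector_derivative fmode L n x) (at x within {min 0 L..max 0 L})" for x
  proof -
    have "((\<lambda>x. fmode L n x / c) has_vector_derivative (c * fmode L n x) / c) (at x within {min 0 L..max 0 L})"
      unfolding c_def by (rule has_vector_derivative_divide[OF fmode_has_vector_derivative])
    thus ?thesis using c0 by simp
  qed
  have "(LBINT x=0..L. fmode L n x) = fmode L n L / c - fmode L n 0 / c"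
    using interval_integral_FTC_finite[of 0 L "fmode L n" "\<lambda>x. fmode L n x / c", OF continuous_on_fmode D] by (simp add: zero_ereal_def)
  also have "fmode L n L = fmode L n 0" using fmode_periodic[OF L, of n 0] by simp
  finally show ?thesis using False L interval_integral_Icc[of 0 L "fmode L n"] by (simp add: zero_ereal_def)
qed

lemma integral_fmode_mult_cnj:
  assumes L: "L > 0"
  shows "(LINT x:{0..L}|lborel. fmode L n x * cnj (fmode L m x)) = (if n = m then complex_of_real L else 0)"
  using integral_fmode[OF L, of "n - m"] by (simp add: cnj_fmode fmode_mult)

lemma fmode_cos_sin: "fmode L n x = complex_of_real (cos (freq L * of_int n * x)) + \<i> * complex_of_real (sin (freq L * of_int n * x))"
  unfolding fmode_def exp_Euler cos_of_real sin_of_real ..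

lemma cnj_fmode_cos_sin: "cnj (fmode L n x) = complex_of_real (cos (freq L * of_int n * x)) - \<i> * complex_of_real (sin (freq L * of_int n * x))"
  unfolding fmode_cos_sin by simp

lemma fmode_ne_1:
  assumes L: "L > 0" and k: "k \<noteq> 0" and n: "n \<noteq> 0" and nk: "\<bar>n\<bar> < \<bar>k\<bar>"
  shows "fmode L n (L / of_int k) \<noteq> 1"
proof
  assume "fmode L n (L / of_int k) = 1"
  hence "exp (\<i> * complex_of_real (freq L * of_int n * (L / of_int k))) = 1" by (simp add: fmode_def)
  then obtain m :: int where m: "Im (\<i> * complex_of_real (freq L * of_int n * (L / of_int k))) = real_of_int (2 * m) * pi"
    unfolding exp_eq_1 by blast
  hence "2 * pi * of_int n / of_int k = 2 * of_int m * pi" using L by (simp add: freq_def)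
  hence "real_of_int n = real_of_int m * of_int k" using k by (simp add: field_simps)
  hence nm: "n = m * k" by (metis of_int_eq_iff of_int_mult)
  show False
  proof (cases "m = 0")
    case True then show False using nm n by simp
  next
    case False
    hence "1 \<le> \<bar>m\<bar>" by linarith
    hence "1 * \<bar>k\<bar> \<le> \<bar>m\<bar> * \<bar>k\<bar>" by (intro mult_right_mono) auto
    hence "\<bar>k\<bar> \<le> \<bar>m\<bar> * \<bar>k\<bar>" by simp
    thus False using nk nm by (simp add: abs_mult)
  qed
qed

lemma abs_divide_of_int_le:
  fixes L :: real and k :: int
  assumes "L > 0" and "k \<noteq> 0"
  shows "\<bar>L / of_int k\<bar> \<le> L"
proof -
  have "1 \<le> \<bar>real_of_int k\<bar>" using assms(2) by linarith
  hence "L / \<bar>real_of_int k\<bar> \<le> L" using assms(1) by (simp add: divide_le_eq)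
  thus ?thesis using assms(1) by (simp add: abs_divide)
qed

lemma set_borel_measurable_borel:
  fixes g :: "real \<Rightarrow> 'a::{banach, second_countable_topology}"
  assumes [measurable]: "g \<in> borel_measurable borel" "A \<in> sets borel"
  shows "set_borel_measurable lborel A g"
  unfolding set_borel_measurable_def by measurable

lemma set_integral_nonneg:
  fixes f :: "real \<Rightarrow> real"
  assumes "\<And>x. x \<in> A \<Longrightarrow> 0 \<le> f x"
  shows "0 \<le> (LINT x:A|M. f x)"
  unfolding set_lebesgue_integral_def
  by (rule integral_nonneg_AE) (auto simp: assms indicator_def)

lemma set_integral_sum:
  fixes f :: "'i \<Rightarrow> real \<Rightarrow> 'a::{banach, second_countable_topology}"
  assumes "finite I" "\<And>i. i \<in> I \<Longrightarrow> set_integrable M A (f i)"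
  shows "(LINT x:A|M. (\<Sum>i\<in>I. f i x)) = (\<Sum>i\<in>I. LINT x:A|M. f i x)"
proof -
  have e: "(\<lambda>x. indicator A x *\<^sub>R (\<Sum>i\<in>I. f i x)) = (\<lambda>x. \<Sum>i\<in>I. indicator A x *\<^sub>R f i x)"
    by (simp only: scaleR_sum_right)
  show ?thesis using assms unfolding set_lebesgue_integral_def set_integrable_def e
    by (intro Bochner_Integration.integral_sum) auto
qed

lemma set_integral_cnj:
  "(LINT x:A|M. cnj (f x)) = cnj (LINT x:A|M. f x)"
proof -
  have "(\<lambda>x. indicator A x *\<^sub>R cnj (f x)) = (\<lambda>x. cnj (indicator A x *\<^sub>R f x))"
    by (simp add: scaleR_conv_of_real)
  thus ?thesis unfolding set_lebesgue_integral_def by (simp only: Bochner_Integration.integral_cnj)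
qed

lemma set_integral_lin_comb:
  fixes f g :: "real \<Rightarrow> real"
  assumes "set_integrable lborel A f" "set_integrable lborel A g"
  shows "(LINT x:A|lborel. c1 * f x + c2 * g x) = c1 * (LINT x:A|lborel. f x) + c2 * (LINT x:A|lborel. g x)"
  using assms by (simp add: set_integral_add set_integrable_mult_right set_integral_mult_right)

lemma set_integral_cong_AE:
  fixes f g :: "real \<Rightarrow> real"
  assumes "f \<in> borel_measurable borel" "g \<in> borel_measurable borel" "AE x in lborel. f x = g x"
    and A: "A \<in> sets borel"
  shows "(LINT x:A|lborel. f x) = (LINT x:A|lborel. g x)"
  by (rule set_lebesgue_integral_cong_AE) (use assms in \<open>auto elim: AE_mp\<close>)

lemma set_integrable_real_mult:
  fixes f g :: "real \<Rightarrow> real"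
  assumes f: "f \<in> borel_measurable borel" and g: "g \<in> borel_measurable borel"
    and f2: "set_integrable lborel A (\<lambda>x. (f x)\<^sup>2)" and g2: "set_integrable lborel A (\<lambda>x. (g x)\<^sup>2)"
    and A: "A \<in> sets borel"
  shows "set_integrable lborel A (\<lambda>x. f x * g x)"
proof (rule set_integrable_bound[where f="\<lambda>x. (f x)\<^sup>2 + (g x)\<^sup>2"])
  show "set_integrable lborel A (\<lambda>x. (f x)\<^sup>2 + (g x)\<^sup>2)" using f2 g2 by (rule set_integral_add)
  show "set_borel_measurable lborel A (\<lambda>x. f x * g x)" using f g A by (intro set_borel_measurable_borel) auto
  show "AE x\<in>A in lborel. norm (f x * g x) \<le> norm ((f x)\<^sup>2 + (g x)\<^sup>2)"
  proof (rule AE_I2, rule impI)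
    fix x
    have "2 * (\<bar>f x\<bar> * \<bar>g x\<bar>) \<le> \<bar>f x\<bar>\<^sup>2 + \<bar>g x\<bar>\<^sup>2" using sum_squares_bound[of "\<bar>f x\<bar>" "\<bar>g x\<bar>"] by (simp add: mult.assoc)
    moreover have "0 \<le> \<bar>f x\<bar> * \<bar>g x\<bar>" by simp
    ultimately have "\<bar>f x\<bar> * \<bar>g x\<bar> \<le> \<bar>f x\<bar>\<^sup>2 + \<bar>g x\<bar>\<^sup>2" by linarith
    hence "\<bar>f x\<bar> * \<bar>g x\<bar> \<le> (f x)\<^sup>2 + (g x)\<^sup>2" by simp
    thus "norm (f x * g x) \<le> norm ((f x)\<^sup>2 + (g x)\<^sup>2)" by (simp add: abs_mult)
  qed
qed

lemma continuous_bounded_on_interval: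
  fixes g :: "real \<Rightarrow> real"
  assumes "continuous_on UNIV g"
  shows "\<exists>C. \<forall>x\<in>{a..b}. \<bar>g x\<bar> \<le> C"
proof -
  have "compact (g ` {a..b})" by (rule compact_continuous_image[OF continuous_on_subset[OF assms] compact_Icc]) auto
  hence "bounded (g ` {a..b})" by (rule compact_imp_bounded)
  then obtain C where "\<forall>y\<in>g ` {a..b}. norm y \<le> C" unfolding bounded_iff by blast
  thus ?thesis by auto
qed

lemma set_integrable_sq_mult_continuous:
  fixes f h :: "real \<Rightarrow> real"
  assumes f: "f \<in> borel_measurable borel" and f2: "set_integrable lborel {a..b} (\<lambda>x. (f x)\<^sup>2)"
    and h: "continuous_on UNIV h"
  shows "set_integrable lborel {a..b} (\<lambda>x. (f x)\<^sup>2 * h x)"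
proof -
  obtain C where C: "\<forall>x\<in>{a..b}. \<bar>h x\<bar> \<le> C" using continuous_bounded_on_interval[OF h] by blast
  have hm: "h \<in> borel_measurable borel" by (rule borel_measurable_continuous_onI[OF h])
  show ?thesis
  proof (rule set_integrable_bound[where f="\<lambda>x. C * (f x)\<^sup>2"])
    show "set_integrable lborel {a..b} (\<lambda>x. C * (f x)\<^sup>2)" using f2 by (rule set_integrable_mult_right)
    show "set_borel_measurable lborel {a..b} (\<lambda>x. (f x)\<^sup>2 * h x)" using f hm by (intro set_borel_measurable_borel) auto
    show "AE x\<in>{a..b} in lborel. norm ((f x)\<^sup>2 * h x) \<le> norm (C * (f x)\<^sup>2)"
    proof (rule AE_I2, rule impI)
      fix x assume x: "x \<in> {a..b}"
      have "\<bar>(f x)\<^sup>2 * h x\<bar> = (f x)\<^sup>2 * \<bar>h x\<bar>" by (simp add: abs_mult)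
      also have "\<dots> \<le> (f x)\<^sup>2 * C" using C x by (intro mult_left_mono) auto
      finally show "norm ((f x)\<^sup>2 * h x) \<le> norm (C * (f x)\<^sup>2)" by (simp add: mult.commute)
    qed
  qed
qed

lemma set_integrable_mult_continuous:
  fixes f h :: "real \<Rightarrow> real"
  assumes f: "f \<in> borel_measurable borel" and f2: "set_integrable lborel {a..b} (\<lambda>x. (f x)\<^sup>2)"
    and h: "continuous_on UNIV h"
  shows "set_integrable lborel {a..b} (\<lambda>x. f x * h x)"
proof (rule set_integrable_real_mult[OF f _ f2])
  show "h \<in> borel_measurable borel" by (rule borel_measurable_continuous_onI[OF h])
  show "set_integrable lborel {a..b} (\<lambda>x. (h x)\<^sup>2)"
    by (rule borel_integrable_atLeastAtMost') (intro continuous_intros continuous_on_subset[OF h], simp)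
qed simp

lemma set_integrable_nn_integral_finite:
  fixes h :: "real \<Rightarrow> real"
  assumes meas: "h \<in> borel_measurable borel" and nn: "\<And>x. 0 \<le> h x" and A: "A \<in> sets borel"
    and fin: "(\<integral>\<^sup>+ x. ennreal (h x) * indicator A x \<partial>lborel) < \<infinity>"
  shows "set_integrable lborel A h"
    and "ennreal (LINT x:A|lborel. h x) = (\<integral>\<^sup>+ x. ennreal (h x) * indicator A x \<partial>lborel)"
proof -
  have ptw: "ennreal (norm (indicator A x *\<^sub>R h x)) = ennreal (h x) * indicator A x"
    "ennreal (indicator A x *\<^sub>R h x) = ennreal (h x) * indicator A x" for x
    using nn by (auto simp: indicator_def)
  have [measurable]: "A \<in> sets borel" "h \<in> borel_measurable borel" using A meas by auto
  have mA: "(\<lambda>x. indicator A x *\<^sub>R h x) \<in> borel_measurable lborel" by simp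
  show int: "set_integrable lborel A h"
    unfolding set_integrable_def by (rule integrableI_bounded[OF mA]) (simp only: ptw fin)
  have "(\<integral>\<^sup>+ x. ennreal (indicator A x *\<^sub>R h x) \<partial>lborel) = ennreal (LINT x|lborel. indicator A x *\<^sub>R h x)"
    by (rule nn_integral_eq_integral[OF int[unfolded set_integrable_def]]) (auto intro!: AE_I2 simp: nn)
  then show "ennreal (LINT x:A|lborel. h x) = (\<integral>\<^sup>+ x. ennreal (h x) * indicator A x \<partial>lborel)"
    unfolding set_lebesgue_integral_def by (simp only: ptw)
qed

lemma nn_integral_tendsto_0_imp_set_integral:
  fixes h :: "nat \<Rightarrow> real \<Rightarrow> real"
  assumes meas: "\<And>m. h m \<in> borel_measurable borel" and nn: "\<And>m x. 0 \<le> h m x" and A: "A \<in> sets borel"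
    and lim: "(\<lambda>m. \<integral>\<^sup>+ x. ennreal (h m x) * indicator A x \<partial>lborel) \<longlonglongrightarrow> 0"
  shows "eventually (\<lambda>m. set_integrable lborel A (h m)) sequentially"
    and "(\<lambda>m. LINT x:A|lborel. h m x) \<longlonglongrightarrow> 0"
proof -
  have fin: "eventually (\<lambda>m. (\<integral>\<^sup>+ x. ennreal (h m x) * indicator A x \<partial>lborel) < \<infinity>) sequentially"
    using order_tendstoD(2)[OF lim, of \<infinity>] by simp
  show "eventually (\<lambda>m. set_integrable lborel A (h m)) sequentially"
    using fin by eventually_elim (rule set_integrable_nn_integral_finite(1)[OF meas nn A])
  have "eventually (\<lambda>m. ennreal (LINT x:A|lborel. h m x) = (\<integral>\<^sup>+ x. ennreal (h m x) * indicator A x \<partial>lborel)) sequentially"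
    using fin by eventually_elim (rule set_integrable_nn_integral_finite(2)[OF meas nn A])
  hence "(\<lambda>m. ennreal (LINT x:A|lborel. h m x)) \<longlonglongrightarrow> 0"
    using lim by (simp add: tendsto_cong)
  thus "(\<lambda>m. LINT x:A|lborel. h m x) \<longlonglongrightarrow> 0"
    by (subst (asm) ennreal_tendsto_0_iff) (auto intro: set_integral_nonneg nn)
qed

lemma set_integral_translate:
  fixes h :: "real \<Rightarrow> 'a::{banach, second_countable_topology}"
  shows "(LINT x:{a..b}|lborel. h (x + s)) = (LINT x:{a+s..b+s}|lborel. h x)"
proof -
  have "(LINT x:{a+s..b+s}|lborel. h x) = (LINT x|lborel. indicator {a+s..b+s} (s + 1 * x) *\<^sub>R h (s + 1 * x))"
    unfolding set_lebesgue_integral_def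
    using lborel_integral_real_affine[of 1 "\<lambda>y. indicator {a+s..b+s} y *\<^sub>R h y" s] by simp
  also have "\<dots> = (LINT x|lborel. indicator {a..b} x *\<^sub>R h (x + s))"
    by (intro Bochner_Integration.integral_cong refl) (auto simp: indicator_def add.commute)
  finally show ?thesis unfolding set_lebesgue_integral_def by simp
qed

lemma set_integrable_translate:
  fixes h :: "real \<Rightarrow> 'a::{banach, second_countable_topology}"
  shows "set_integrable lborel {a..b} (\<lambda>x. h (x + s)) \<longleftrightarrow> set_integrable lborel {a+s..b+s} h"
proof -
  have "integrable lborel (\<lambda>x. indicator {a+s..b+s} (s + 1 * x) *\<^sub>R h (s + 1 * x)) \<longleftrightarrow> integrable lborel (\<lambda>x. indicator {a+s..b+s} x *\<^sub>R h x)"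
    by (rule lborel_integrable_real_affine_iff) simp
  moreover have "(\<lambda>x. indicator {a+s..b+s} (s + 1 * x) *\<^sub>R h (s + 1 * x)) = (\<lambda>x. indicator {a..b} x *\<^sub>R h (x + s))"
    by (rule ext) (auto simp: indicator_def add.commute)
  ultimately show ?thesis unfolding set_integrable_def by simp
qed

lemma nn_integral_translate:
  fixes g :: "real \<Rightarrow> ennreal"
  assumes [measurable]: "g \<in> borel_measurable borel"
  shows "(\<integral>\<^sup>+ x. g (x + c) * indicator {a..b} x \<partial>lborel) = (\<integral>\<^sup>+ y. g y * indicator {a+c..b+c} y \<partial>lborel)"
proof -
  have "(\<integral>\<^sup>+ y. g y * indicator {a+c..b+c} y \<partial>lborel) = ennreal \<bar>1\<bar> * (\<integral>\<^sup>+ x. g (c + 1 * x) * indicator {a+c..b+c} (c + 1 * x) \<partial>lborel)"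
    by (rule nn_integral_real_affine) auto
  also have "\<dots> = (\<integral>\<^sup>+ x. g (x + c) * indicator {a..b} x \<partial>lborel)"
    by (simp add: add.commute indicator_def)
  finally show ?thesis by simp
qed

lemma set_integral_split:
  fixes h :: "real \<Rightarrow> 'a::{banach, second_countable_topology}"
  assumes ab: "a \<le> b" and bc: "b \<le> c" and i: "set_integrable lborel {a..c} h"
  shows "(LINT x:{a..b}|lborel. h x) + (LINT x:{b..c}|lborel. h x) = (LINT x:{a..c}|lborel. h x)"
proof -
  have i': "set_integrable lborel {a<..<c} h" by (rule set_integrable_subset[OF i]) auto
  have m1: "min (ereal a) (min (ereal b) (ereal c)) = ereal a" using ab bc by simp
  have m2: "max (ereal a) (max (ereal b) (ereal c)) = ereal c" using ab bc by simp
  have I: "interval_lebesgue_integrable lborel (min (ereal a) (min (ereal b) (ereal c))) (max (ereal a) (max (ereal b) (ereal c))) h"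
    unfolding m1 m2 interval_lebesgue_integrable_def using ab bc i' by simp
  have "(LBINT x=a..b. h x) + (LBINT x=b..c. h x) = (LBINT x=a..c. h x)"
    by (rule interval_integral_sum[OF I])
  thus ?thesis using ab bc by (simp add: interval_integral_Icc)
qed

lemma set_integral_shift_by_period:
  fixes h :: "real \<Rightarrow> 'a::{banach, second_countable_topology}"
  assumes per: "AE x in lborel. h (x + L) = h x" and hm: "h \<in> borel_measurable borel"
  shows "(LINT x:{a..b}|lborel. h (x + L)) = (LINT x:{a..b}|lborel. h x)"
proof (rule set_lebesgue_integral_cong_AE)
  have [measurable]: "h \<in> borel_measurable borel" by (rule hm)
  show "(\<lambda>x. h (x + L)) \<in> borel_measurable lborel" by simp
  show "h \<in> borel_measurable lborel" by simp
  show "AE x\<in>{a..b} in lborel. h (x + L) = h x" by (rule AE_mp[OF per], rule AE_I2) auto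
qed simp

lemma set_integral_period_window_nonneg:
  fixes h :: "real \<Rightarrow> 'a::{banach, second_countable_topology}"
  assumes L: "L > 0" and per: "AE x in lborel. h (x + L) = h x"
    and hm: "h \<in> borel_measurable borel"
    and int: "\<And>a. set_integrable lborel {a..a+L} h" and c0: "0 \<le> c" "c \<le> L"
  shows "(LINT x:{c..c+L}|lborel. h x) = (LINT x:{0..L}|lborel. h x)"
proof -
  have i2: "set_integrable lborel {0..2*L} h"
  proof -
    have "set_integrable lborel {0..L} h" using int[of 0] by simp
    moreover have "set_integrable lborel {L..2*L} h" using int[of L] by (simp only: mult_2)
    ultimately have "set_integrable lborel ({0..L} \<union> {L..2*L}) h" by (rule set_integrable_Un) auto
    moreover have "{0..L} \<union> {L..2*L} = {0..2*L}" using L by auto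
    ultimately show ?thesis by simp
  qed
  have sub: "set_integrable lborel {a..b} h" if "0 \<le> a" "b \<le> 2*L" for a b
    by (rule set_integrable_subset[OF i2]) (use that in auto)
  have "(LINT x:{c..c+L}|lborel. h x) = (LINT x:{c..L}|lborel. h x) + (LINT x:{L..c+L}|lborel. h x)"
    by (rule set_integral_split[symmetric]) (use c0 L in \<open>auto intro: sub\<close>)
  also have "(LINT x:{L..c+L}|lborel. h x) = (LINT x:{0..c}|lborel. h (x + L))"
    using set_integral_translate[where h=h and a=0 and b=c and s=L] by simp
  also have "\<dots> = (LINT x:{0..c}|lborel. h x)" by (rule set_integral_shift_by_period[OF per hm])
  also have "(LINT x:{c..L}|lborel. h x) + (LINT x:{0..c}|lborel. h x) = (LINT x:{0..L}|lborel. h x)"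
    using set_integral_split[where a=0 and b=c and c=L and h=h, OF c0(1) c0(2) sub[of 0 L]] L by (simp add: add.commute)
  finally show ?thesis .
qed

lemma set_integral_period_window:
  fixes h :: "real \<Rightarrow> 'a::{banach, second_countable_topology}"
  assumes L: "L > 0" and per: "AE x in lborel. h (x + L) = h x"
    and hm: "h \<in> borel_measurable borel"
    and int: "\<And>a. set_integrable lborel {a..a+L} h" and c: "\<bar>c\<bar> \<le> L"
  shows "(LINT x:{c..c+L}|lborel. h x) = (LINT x:{0..L}|lborel. h x)"
proof (cases "0 \<le> c")
  case True then show ?thesis using set_integral_period_window_nonneg[OF L per hm int] c by auto
next
  case False
  have "(LINT x:{c..c+L}|lborel. h x) = (LINT x:{c..c+L}|lborel. h (x + L))"
    by (rule set_integral_shift_by_period[OF per hm, symmetric])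
  also have "\<dots> = (LINT x:{(c+L)..(c+L)+L}|lborel. h x)" by (simp add: set_integral_translate)
  also have "\<dots> = (LINT x:{0..L}|lborel. h x)"
    using False c by (intro set_integral_period_window_nonneg[OF L per hm int]) auto
  finally show ?thesis .
qed

lemma set_integral_shift_periodic:
  fixes H :: "real \<Rightarrow> 'a::{banach, second_countable_topology}"
  assumes L: "L > 0" and per: "AE x in lborel. H (x + L) = H x"
    and Hm: "H \<in> borel_measurable borel"
    and int: "\<And>a. set_integrable lborel {a..a+L} H" and c: "\<bar>c\<bar> \<le> L"
  shows "(LINT x:{0..L}|lborel. H (x + c)) = (LINT x:{0..L}|lborel. H x)"
proof -
  have "(LINT x:{0..L}|lborel. H (x + c)) = (LINT x:{0+c..L+c}|lborel. H x)" by (rule set_integral_translate)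
  also have "\<dots> = (LINT x:{c..c+L}|lborel. H x)" by (simp add: add.commute)
  also have "\<dots> = (LINT x:{0..L}|lborel. H x)" by (rule set_integral_period_window[OF L per Hm int c])
  finally show ?thesis .
qed

lemma AE_shift_eq:
  fixes f g :: "real \<Rightarrow> real"
  assumes [measurable]: "f \<in> borel_measurable borel" "g \<in> borel_measurable borel"
    and ae: "AE x in lborel. f x = g x"
  shows "AE x in lborel. f (x + c) = g (x + c)"
proof -
  have "AE x in lborel. f (c + 1 * x) = g (c + 1 * x)"
    by (rule AE_borel_affine) (use ae in auto)
  thus ?thesis by (simp add: add.commute)
qed

lemma AE_shift_periodic_cong:
  fixes f g :: "real \<Rightarrow> real"
  assumes "f \<in> borel_measurable borel" "g \<in> borel_measurable borel"
    and fg: "AE x in lborel. f x = g x" and per: "AE x in lborel. g (x + c) = g x"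
  shows "AE x in lborel. f (x + c) = f x"
  using AE_shift_eq[OF assms(1-3), of c] per fg by eventually_elim simp

definition sq_integrable :: "real set \<Rightarrow> (real \<Rightarrow> complex) \<Rightarrow> bool" where
  "sq_integrable A g \<longleftrightarrow> g \<in> borel_measurable borel \<and> set_integrable lborel A (\<lambda>x. (cmod (g x))\<^sup>2)"

lemma set_integrable_mult_sq_integrable:
  assumes g: "sq_integrable A g" and h: "sq_integrable A h" and A: "A \<in> sets borel"
  shows "set_integrable lborel A (\<lambda>x. g x * h x)"
proof (rule set_integrable_bound[where f="\<lambda>x. (cmod (g x))\<^sup>2 + (cmod (h x))\<^sup>2"])
  show "set_integrable lborel A (\<lambda>x. (cmod (g x))\<^sup>2 + (cmod (h x))\<^sup>2)"
    using g h by (intro set_integral_add) (auto simp: sq_integrable_def)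
  show "set_borel_measurable lborel A (\<lambda>x. g x * h x)"
    using g h A by (intro set_borel_measurable_borel) (auto simp: sq_integrable_def)
  show "AE x\<in>A in lborel. norm (g x * h x) \<le> norm ((cmod (g x))\<^sup>2 + (cmod (h x))\<^sup>2)"
  proof (rule AE_I2, rule impI)
    fix x
    have "cmod (g x) * cmod (h x) \<le> (cmod (g x))\<^sup>2 + (cmod (h x))\<^sup>2"
    proof -
      have "2 * (cmod (g x) * cmod (h x)) \<le> (cmod (g x))\<^sup>2 + (cmod (h x))\<^sup>2"
        using sum_squares_bound[of "cmod (g x)" "cmod (h x)"] by (simp add: mult.assoc)
      moreover have "0 \<le> cmod (g x) * cmod (h x)" by simp
      ultimately show ?thesis by linarith
    qed
    thus "norm (g x * h x) \<le> norm ((cmod (g x))\<^sup>2 + (cmod (h x))\<^sup>2)"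
      by (simp add: norm_mult)
  qed
qed

lemma sq_integrable_continuous:
  assumes "continuous_on UNIV g" shows "sq_integrable {a..b} g"
  unfolding sq_integrable_def
proof
  show "g \<in> borel_measurable borel" using assms by (rule borel_measurable_continuous_onI)
  show "set_integrable lborel {a..b} (\<lambda>x. (cmod (g x))\<^sup>2)"
    by (rule borel_integrable_atLeastAtMost') (intro continuous_intros continuous_on_subset[OF assms], auto)
qed

lemma sq_integrable_add:
  assumes g: "sq_integrable A g" and h: "sq_integrable A h" and A: "A \<in> sets borel"
  shows "sq_integrable A (\<lambda>x. g x + h x)"
  unfolding sq_integrable_def
proof
  show "(\<lambda>x. g x + h x) \<in> borel_measurable borel" using g h by (auto simp: sq_integrable_def)
  show "set_integrable lborel A (\<lambda>x. (cmod (g x + h x))\<^sup>2)"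
  proof (rule set_integrable_bound[where f="\<lambda>x. 2 * (cmod (g x))\<^sup>2 + 2 * (cmod (h x))\<^sup>2"])
    show "set_integrable lborel A (\<lambda>x. 2 * (cmod (g x))\<^sup>2 + 2 * (cmod (h x))\<^sup>2)"
      using g h by (intro set_integral_add set_integrable_mult_right) (auto simp: sq_integrable_def)
    show "set_borel_measurable lborel A (\<lambda>x. (cmod (g x + h x))\<^sup>2)"
      using g h A by (intro set_borel_measurable_borel) (auto simp: sq_integrable_def)
    show "AE x\<in>A in lborel. norm ((cmod (g x + h x))\<^sup>2) \<le> norm (2 * (cmod (g x))\<^sup>2 + 2 * (cmod (h x))\<^sup>2)"
    proof (rule AE_I2, rule impI)
      fix x
      have "(cmod (g x + h x))\<^sup>2 \<le> (cmod (g x) + cmod (h x))\<^sup>2"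
        by (simp add: norm_triangle_ineq power_mono)
      also have "\<dots> \<le> 2 * (cmod (g x))\<^sup>2 + 2 * (cmod (h x))\<^sup>2"
        using sum_squares_bound[of "cmod (g x)" "cmod (h x)"] by (simp add: power2_sum)
      finally show "norm ((cmod (g x + h x))\<^sup>2) \<le> norm (2 * (cmod (g x))\<^sup>2 + 2 * (cmod (h x))\<^sup>2)"
        by simp
    qed
  qed
qed

lemma sq_integrable_mult_bounded:
  assumes g: "sq_integrable A g" and h: "h \<in> borel_measurable borel" and C: "\<And>x. cmod (h x) \<le> C" and A: "A \<in> sets borel"
  shows "sq_integrable A (\<lambda>x. h x * g x)"
  unfolding sq_integrable_def
proof
  show "(\<lambda>x. h x * g x) \<in> borel_measurable borel" using g h by (auto simp: sq_integrable_def)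
  show "set_integrable lborel A (\<lambda>x. (cmod (h x * g x))\<^sup>2)"
  proof (rule set_integrable_bound[where f="\<lambda>x. C\<^sup>2 * (cmod (g x))\<^sup>2"])
    show "set_integrable lborel A (\<lambda>x. C\<^sup>2 * (cmod (g x))\<^sup>2)"
      using g by (intro set_integrable_mult_right) (auto simp: sq_integrable_def)
    show "set_borel_measurable lborel A (\<lambda>x. (cmod (h x * g x))\<^sup>2)"
      using g h A by (intro set_borel_measurable_borel) (auto simp: sq_integrable_def)
    show "AE x\<in>A in lborel. norm ((cmod (h x * g x))\<^sup>2) \<le> norm (C\<^sup>2 * (cmod (g x))\<^sup>2)"
    proof (rule AE_I2, rule impI)
      fix x
      have "(cmod (h x * g x))\<^sup>2 = (cmod (h x))\<^sup>2 * (cmod (g x))\<^sup>2" by (simp add: norm_mult power_mult_distrib)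
      also have "\<dots> \<le> C\<^sup>2 * (cmod (g x))\<^sup>2"
        by (intro mult_right_mono power_mono C) auto
      finally show "norm ((cmod (h x * g x))\<^sup>2) \<le> norm (C\<^sup>2 * (cmod (g x))\<^sup>2)" by simp
    qed
  qed
qed

lemma sq_integrable_uminus: "sq_integrable A g \<Longrightarrow> sq_integrable A (\<lambda>x. - g x)"
  by (simp add: sq_integrable_def)

lemma sq_integrable_diff: "sq_integrable A g \<Longrightarrow> sq_integrable A h \<Longrightarrow> A \<in> sets borel \<Longrightarrow> sq_integrable A (\<lambda>x. g x - h x)"
  using sq_integrable_add[of A g "\<lambda>x. - h x"] sq_integrable_uminus[of A h] by simp

lemma sq_integrable_cnj:
  assumes "sq_integrable A g"
  shows "sq_integrable A (\<lambda>x. cnj (g x))"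
proof -
  have g: "g \<in> borel_measurable borel" using assms by (simp add: sq_integrable_def)
  have c: "cnj \<in> borel_measurable borel"
    by (intro borel_measurable_continuous_onI linear_continuous_on bounded_linear_cnj)
  have "(\<lambda>x. cnj (g x)) \<in> borel_measurable borel" using measurable_compose[OF g c] by simp
  thus ?thesis using assms by (simp add: sq_integrable_def)
qed

lemma sq_integrable_of_real: "sq_integrable A (\<lambda>x. complex_of_real (f x)) \<longleftrightarrow> f \<in> borel_measurable borel \<and> set_integrable lborel A (\<lambda>x. (f x)\<^sup>2)"
proof -
  have "(\<lambda>x. complex_of_real (f x)) \<in> borel_measurable borel \<longleftrightarrow> f \<in> borel_measurable borel"
  proof
    assume [measurable]: "(\<lambda>x. complex_of_real (f x)) \<in> borel_measurable borel"
    have "(\<lambda>x. Re (complex_of_real (f x))) \<in> borel_measurable borel" by measurable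
    thus "f \<in> borel_measurable borel" by simp
  next
    assume [measurable]: "f \<in> borel_measurable borel"
    show "(\<lambda>x. complex_of_real (f x)) \<in> borel_measurable borel" by measurable
  qed
  thus ?thesis by (simp add: sq_integrable_def)
qed

lemma set_integrable_norm_sq:
  assumes "sq_integrable A g" shows "set_integrable lborel A (\<lambda>x. (cmod (g x))\<^sup>2)"
  using assms by (simp add: sq_integrable_def)

lemma sq_integrable_fmode: "sq_integrable {a..b} (fmode L n)"
  by (rule sq_integrable_continuous, rule continuous_on_fmode)

lemma sq_integrable_cnj_fmode: "sq_integrable {a..b} (\<lambda>x. cnj (fmode L n x))"
  by (rule sq_integrable_cnj, rule sq_integrable_fmode)

lemma sq_integrable_cos: "sq_integrable {a..b} (\<lambda>x. complex_of_real (cos (c * x)))"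
  by (rule sq_integrable_continuous) (intro continuous_intros)

lemma sq_integrable_sin: "sq_integrable {a..b} (\<lambda>x. complex_of_real (sin (c * x)))"
  by (rule sq_integrable_continuous) (intro continuous_intros)

lemma of_real_norm_sq: "(complex_of_real (cmod z))\<^sup>2 = z * cnj z"
  by (simp only: of_real_power[symmetric] complex_norm_square)

lemma of_real_integral_norm_sq:
  "complex_of_real (LINT x:A|lborel. (cmod (g x))\<^sup>2) = (LINT x:A|lborel. g x * cnj (g x))"
  by (simp only: set_integral_complex_of_real[symmetric] complex_norm_square)

section \<open>Trigonometric sums and Fourier coefficients\<close>

definition trig_sum :: "real \<Rightarrow> nat \<Rightarrow> (int \<Rightarrow> complex) \<Rightarrow> real \<Rightarrow> complex" where
  "trig_sum L N c x = (\<Sum>n\<in>{-int N..int N}. c n * fmode L n x)"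

definition fcoeff :: "real \<Rightarrow> (real \<Rightarrow> complex) \<Rightarrow> int \<Rightarrow> complex" where
  "fcoeff L g n = (LINT x:{0..L}|lborel. g x * cnj (fmode L n x)) / complex_of_real L"

lemma fourier_coeff_eq_fcoeff: "fourier_coeff L f n = fcoeff L (\<lambda>x. complex_of_real (f x)) n"
  unfolding fourier_coeff_def fcoeff_def exp_minus_eq_cnj_fmode ..

lemma fourier_coeff_0: "fourier_coeff L f 0 = complex_of_real (LINT x:{0..L}|lborel. f x) / complex_of_real L"
  unfolding fourier_coeff_def by (simp add: set_integral_complex_of_real)

lemma proj_eq_0:
  assumes "\<And>n. n \<in> {-int M..int M} \<Longrightarrow> fourier_coeff L f n = 0"
  shows "proj L M f = (\<lambda>x. 0)"
  unfolding proj_def[abs_def] using assms by (intro ext sum.neutral) auto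

lemma trig_poly_imp_trig_sum: "trig_poly L p \<Longrightarrow> \<exists>N c. p = trig_sum L N c"
  unfolding trig_poly_def trig_sum_def fmode_def by blast

lemma trig_poly_trig_sum: "trig_poly L (trig_sum L N c)"
  unfolding trig_poly_def trig_sum_def fmode_def by blast

lemma continuous_on_trig_sum: "continuous_on S (trig_sum L N c)"
  unfolding trig_sum_def by (intro continuous_intros)

lemma norm_trig_sum_le: "cmod (trig_sum L N c x) \<le> (\<Sum>n\<in>{-int N..int N}. cmod (c n))"
  unfolding trig_sum_def by (rule order_trans[OF norm_sum]) (simp add: norm_mult)

lemma sq_integrable_trig_sum: "sq_integrable {a..b} (trig_sum L N c)"
  by (rule sq_integrable_continuous, rule continuous_on_trig_sum)

lemma trig_sum_extend:
  assumes "N \<le> N'"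
  shows "trig_sum L N c = trig_sum L N' (\<lambda>n. if \<bar>n\<bar> \<le> int N then c n else 0)"
proof
  fix x
  have sub: "{-int N..int N} \<subseteq> {-int N'..int N'}" using assms by auto
  have "trig_sum L N' (\<lambda>n. if \<bar>n\<bar> \<le> int N then c n else 0) x
      = (\<Sum>n\<in>{-int N'..int N'}. (if n \<in> {-int N..int N} then c n * fmode L n x else 0))"
    unfolding trig_sum_def by (intro sum.cong) auto
  also have "\<dots> = (\<Sum>n\<in>{-int N..int N}. c n * fmode L n x)"
    using sum.inter_restrict[of "{-int N'..int N'}" "\<lambda>n. c n * fmode L n x" "{-int N..int N}"] sub
    by (simp add: Int_absorb1)
  finally show "trig_sum L N c x = trig_sum L N' (\<lambda>n. if \<bar>n\<bar> \<le> int N then c n else 0) x"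
    unfolding trig_sum_def by simp
qed

lemma trig_sum_diff: "(\<lambda>x. trig_sum L N a x - trig_sum L N b x) = trig_sum L N (\<lambda>n. a n - b n)"
  unfolding trig_sum_def by (rule ext) (simp add: sum_subtractf left_diff_distrib)

lemma trig_sum_shift: "trig_sum L N c (x + s) = trig_sum L N (\<lambda>n. c n * fmode L n s) x"
  unfolding trig_sum_def by (intro sum.cong refl) (simp add: fmode_def algebra_simps exp_add[symmetric] distrib_left)

lemma trig_sum_periodic: "L > 0 \<Longrightarrow> trig_sum L N c (x + L) = trig_sum L N c x"
  unfolding trig_sum_def by (simp add: fmode_periodic)

lemma integral_mult_cnj_trig_sum:
  assumes L: "L > 0" and g: "sq_integrable {0..L} g"
  shows "(LINT x:{0..L}|lborel. g x * cnj (trig_sum L N c x)) = complex_of_real L * (\<Sum>n\<in>{-int N..int N}. fcoeff L g n * cnj (c n))"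
proof -
  have "(LINT x:{0..L}|lborel. g x * cnj (trig_sum L N c x))
      = (LINT x:{0..L}|lborel. (\<Sum>n\<in>{-int N..int N}. cnj (c n) * (g x * cnj (fmode L n x))))"
    unfolding trig_sum_def by (simp add: sum_distrib_left algebra_simps)
  also have "\<dots> = (\<Sum>n\<in>{-int N..int N}. LINT x:{0..L}|lborel. cnj (c n) * (g x * cnj (fmode L n x)))"
    by (intro set_integral_sum set_integrable_mult_right set_integrable_mult_sq_integrable g sq_integrable_cnj_fmode) auto
  also have "\<dots> = (\<Sum>n\<in>{-int N..int N}. cnj (c n) * (complex_of_real L * fcoeff L g n))"
    using L by (simp add: fcoeff_def set_integral_mult_right)
  finally show ?thesis by (simp add: sum_distrib_left algebra_simps)
qed

lemma fcoeff_trig_sum: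
  assumes L: "L > 0"
  shows "fcoeff L (trig_sum L N c) m = (if \<bar>m\<bar> \<le> int N then c m else 0)"
proof -
  have "(LINT x:{0..L}|lborel. trig_sum L N c x * cnj (fmode L m x))
      = (LINT x:{0..L}|lborel. (\<Sum>n\<in>{-int N..int N}. c n * (fmode L n x * cnj (fmode L m x))))"
    unfolding trig_sum_def sum_distrib_right by (simp only: mult.assoc)
  also have "\<dots> = (\<Sum>n\<in>{-int N..int N}. LINT x:{0..L}|lborel. c n * (fmode L n x * cnj (fmode L m x)))"
    by (intro set_integral_sum set_integrable_mult_right set_integrable_mult_sq_integrable sq_integrable_fmode sq_integrable_cnj_fmode) auto
  also have "\<dots> = (\<Sum>n\<in>{-int N..int N}. c n * (if n = m then complex_of_real L else 0))"
    using L by (simp add: set_integral_mult_right integral_fmode_mult_cnj)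
  also have "\<dots> = (if \<bar>m\<bar> \<le> int N then c m * complex_of_real L else 0)"
    by (simp add: if_distrib[of "\<lambda>z. c _ * z"] sum.delta' abs_le_iff cong: if_cong)
  finally show ?thesis using L by (simp add: fcoeff_def)
qed

lemma integral_norm_sq_trig_sum:
  assumes L: "L > 0"
  shows "(LINT x:{0..L}|lborel. (cmod (trig_sum L N c x))\<^sup>2) = L * (\<Sum>n\<in>{-int N..int N}. (cmod (c n))\<^sup>2)"
proof -
  have "complex_of_real (LINT x:{0..L}|lborel. (cmod (trig_sum L N c x))\<^sup>2) = complex_of_real L * (\<Sum>n\<in>{-int N..int N}. fcoeff L (trig_sum L N c) n * cnj (c n))"
    unfolding of_real_integral_norm_sq by (rule integral_mult_cnj_trig_sum[OF L sq_integrable_trig_sum])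
  also have "\<dots> = complex_of_real L * (\<Sum>n\<in>{-int N..int N}. complex_of_real ((cmod (c n))\<^sup>2))"
    using L by (intro arg_cong[where f="\<lambda>s. _ * s"] sum.cong) (auto simp: fcoeff_trig_sum of_real_norm_sq simp del: complex_mult_cnj)
  also have "\<dots> = complex_of_real (L * (\<Sum>n\<in>{-int N..int N}. (cmod (c n))\<^sup>2))" by simp
  finally show ?thesis by (simp only: of_real_eq_iff)
qed

definition dcoeff :: "real \<Rightarrow> (int \<Rightarrow> complex) \<Rightarrow> int \<Rightarrow> complex" where
  "dcoeff L c n = \<i> * complex_of_real (freq L * of_int n) * c n"

lemma dcoeff_eq: "dcoeff L c = (\<lambda>n. \<i> * complex_of_real (freq L * of_int n) * c n)"
  by (rule ext) (simp add: dcoeff_def)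

lemma norm_dcoeff: "cmod (dcoeff L c n) = \<bar>freq L * of_int n\<bar> * cmod (c n)"
  by (simp add: dcoeff_def norm_mult abs_mult)

lemma trig_sum_has_vector_derivative:
  "(trig_sum L N c has_vector_derivative trig_sum L N (dcoeff L c) x) (at x within S)"
proof -
  have "((\<lambda>x. \<Sum>n\<in>{-int N..int N}. c n * fmode L n x) has_vector_derivative
        (\<Sum>n\<in>{-int N..int N}. c n * (\<i> * complex_of_real (freq L * of_int n) * fmode L n x))) (at x within S)"
    by (intro has_vector_derivative_sum has_vector_derivative_mult_right fmode_has_vector_derivative)
  moreover have "(\<Sum>n\<in>{-int N..int N}. c n * (\<i> * complex_of_real (freq L * of_int n) * fmode L n x)) = trig_sum L N (dcoeff L c) x"
    unfolding trig_sum_def dcoeff_def by (simp add: algebra_simps)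
  ultimately show ?thesis unfolding trig_sum_def[abs_def] by simp
qed

lemma integral_trig_sum_sq_mult_deriv:
  assumes L: "L > 0"
  shows "(LINT x:{0..L}|lborel. (trig_sum L N c x)\<^sup>2 * trig_sum L N (dcoeff L c) x) = 0"
proof -
  let ?g = "trig_sum L N c" and ?g' = "trig_sum L N (dcoeff L c)"
  have D: "((\<lambda>x. ?g x * (?g x * ?g x) / 3) has_vector_derivative (?g x)\<^sup>2 * ?g' x) (at x within {min 0 L..max 0 L})" for x
  proof -
    have d: "(?g has_vector_derivative ?g' x) (at x within {min 0 L..max 0 L})" by (rule trig_sum_has_vector_derivative)
    have e: "(?g x * (?g x * ?g' x + ?g' x * ?g x) + ?g' x * (?g x * ?g x)) / 3 = (?g x)\<^sup>2 * ?g' x"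
      by (simp add: power2_eq_square algebra_simps)
    have "((\<lambda>x. ?g x * (?g x * ?g x) / 3) has_vector_derivative
          (?g x * (?g x * ?g' x + ?g' x * ?g x) + ?g' x * (?g x * ?g x)) / 3) (at x within {min 0 L..max 0 L})"
      by (intro has_vector_derivative_divide has_vector_derivative_mult d)
    thus ?thesis unfolding e .
  qed
  have C: "continuous_on {min 0 L..max 0 L} (\<lambda>x. (?g x)\<^sup>2 * ?g' x)"
    by (intro continuous_intros continuous_on_trig_sum)
  have "(LBINT x=0..L. (?g x)\<^sup>2 * ?g' x) = ?g L * (?g L * ?g L) / 3 - ?g 0 * (?g 0 * ?g 0) / 3"
    using interval_integral_FTC_finite[of 0 L "\<lambda>x. (?g x)\<^sup>2 * ?g' x" "\<lambda>x. ?g x * (?g x * ?g x) / 3", OF C D]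
    by (simp add: zero_ereal_def)
  also have "?g L = ?g 0" using trig_sum_shift[of L N c 0 L] by (simp add: trig_sum_def fmode_periodic[OF L, of _ 0, simplified])
  finally show ?thesis using L interval_integral_Icc[of 0 L "\<lambda>x. (?g x)\<^sup>2 * ?g' x"] by (simp add: zero_ereal_def)
qed

lemma vderiv_trig_sum: "vderiv (trig_sum L N c) = trig_sum L N (dcoeff L c)"
  unfolding vderiv_def by (rule ext, rule vector_derivative_at, rule trig_sum_has_vector_derivative)

lemma vderiv_pow_trig_sum: "(vderiv ^^ j) (trig_sum L N c) = trig_sum L N (\<lambda>n. (\<i> * complex_of_real (freq L * of_int n)) ^ j * c n)"
proof (induction j)
  case 0 then show ?case by simp
next
  case (Suc j)
  show ?case by (simp add: Suc vderiv_trig_sum dcoeff_eq) (simp add: algebra_simps)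
qed

lemma h2norm_nonneg: "0 \<le> h2norm L g"
  unfolding h2norm_def by (intro real_sqrt_ge_zero sum_nonneg set_integral_nonneg) auto

lemma h2norm_trig_sum:
  assumes L: "L > 0"
  shows "h2norm L (trig_sum L N c) = sqrt (\<Sum>j\<le>(2::nat). L * (\<Sum>n\<in>{-int N..int N}. (cmod ((\<i> * complex_of_real (freq L * of_int n)) ^ j * c n))\<^sup>2))"
  unfolding h2norm_def vderiv_pow_trig_sum integral_norm_sq_trig_sum[OF L] ..

lemma h2norm_trig_sum_ge:
  assumes L: "L > 0"
  shows "L * (\<Sum>n\<in>{-int N..int N}. (cmod ((\<i> * complex_of_real (freq L * of_int n)) ^ 2 * c n))\<^sup>2) \<le> (h2norm L (trig_sum L N c))\<^sup>2"
    and "L * (\<Sum>n\<in>{-int N..int N}. (cmod (c n))\<^sup>2) \<le> (h2norm L (trig_sum L N c))\<^sup>2"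
proof -
  define T where "T j = L * (\<Sum>n\<in>{-int N..int N}. (cmod ((\<i> * complex_of_real (freq L * of_int n)) ^ j * c n))\<^sup>2)" for j :: nat
  have T0: "0 \<le> T j" for j unfolding T_def using L by (intro mult_nonneg_nonneg sum_nonneg) auto
  have sq: "(h2norm L (trig_sum L N c))\<^sup>2 = (\<Sum>j\<le>(2::nat). T j)"
    unfolding h2norm_trig_sum[OF L] T_def[symmetric] using T0 by (simp add: sum_nonneg)
  have e: "(\<Sum>j\<le>(2::nat). T j) = T 0 + T 1 + T 2" by (simp add: numeral_2_eq_2)
  show "L * (\<Sum>n\<in>{-int N..int N}. (cmod ((\<i> * complex_of_real (freq L * of_int n)) ^ 2 * c n))\<^sup>2) \<le> (h2norm L (trig_sum L N c))\<^sup>2"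
    using T0[of 0] T0[of 1] unfolding sq e by (simp add: T_def)
  show "L * (\<Sum>n\<in>{-int N..int N}. (cmod (c n))\<^sup>2) \<le> (h2norm L (trig_sum L N c))\<^sup>2"
    using T0[of 2] T0[of 1] unfolding sq e by (simp add: T_def)
qed

lemma h2norm_shift:
  assumes poly: "trig_poly L q" and L: "L > 0"
  shows "h2norm L (\<lambda>x. q (x + c)) = h2norm L q"
proof -
  obtain N a where q: "q = trig_sum L N a" using trig_poly_imp_trig_sum poly by blast
  have e: "(\<lambda>x. q (x + c)) = trig_sum L N (\<lambda>n. a n * fmode L n c)" unfolding q by (rule ext) (rule trig_sum_shift)
  show ?thesis unfolding e unfolding q h2norm_trig_sum[OF L]
    by (simp add: norm_mult mult.assoc[symmetric])
qed

lemma integral_norm_sq_diff_trig_sum: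
  assumes L: "L > 0" and g: "sq_integrable {0..L} g"
  shows "(LINT x:{0..L}|lborel. (cmod (g x - trig_sum L N c x))\<^sup>2)
       = (LINT x:{0..L}|lborel. (cmod (g x))\<^sup>2) - L * (\<Sum>n\<in>{-int N..int N}. (cmod (fcoeff L g n))\<^sup>2)
         + L * (\<Sum>n\<in>{-int N..int N}. (cmod (fcoeff L g n - c n))\<^sup>2)"
proof -
  let ?h = "trig_sum L N c"
  let ?I = "{-int N..int N}"
  have h: "sq_integrable {0..L} ?h" by (rule sq_integrable_trig_sum)
  have i1: "set_integrable lborel {0..L} (\<lambda>x. g x * cnj (g x))" by (intro set_integrable_mult_sq_integrable g sq_integrable_cnj) auto
  have i2: "set_integrable lborel {0..L} (\<lambda>x. g x * cnj (?h x))" by (intro set_integrable_mult_sq_integrable g h sq_integrable_cnj) auto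
  have i3: "set_integrable lborel {0..L} (\<lambda>x. ?h x * cnj (g x))" by (intro set_integrable_mult_sq_integrable g h sq_integrable_cnj) auto
  have i4: "set_integrable lborel {0..L} (\<lambda>x. ?h x * cnj (?h x))" by (intro set_integrable_mult_sq_integrable h sq_integrable_cnj) auto
  have "complex_of_real (LINT x:{0..L}|lborel. (cmod (g x - ?h x))\<^sup>2)
      = (LINT x:{0..L}|lborel. (g x * cnj (g x) - g x * cnj (?h x)) - (?h x * cnj (g x) - ?h x * cnj (?h x)))"
    unfolding of_real_integral_norm_sq by (simp add: algebra_simps)
  also have "\<dots> = ((LINT x:{0..L}|lborel. g x * cnj (g x)) - (LINT x:{0..L}|lborel. g x * cnj (?h x)))
                 - ((LINT x:{0..L}|lborel. ?h x * cnj (g x)) - (LINT x:{0..L}|lborel. ?h x * cnj (?h x)))"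
    using i1 i2 i3 i4 by (simp add: set_integral_diff)
  also have "(LINT x:{0..L}|lborel. ?h x * cnj (g x)) = cnj (LINT x:{0..L}|lborel. g x * cnj (?h x))"
    by (simp add: set_integral_cnj[symmetric] mult.commute)
  also have "(LINT x:{0..L}|lborel. g x * cnj (?h x)) = complex_of_real L * (\<Sum>n\<in>?I. fcoeff L g n * cnj (c n))"
    by (rule integral_mult_cnj_trig_sum[OF L g])
  also have "(LINT x:{0..L}|lborel. ?h x * cnj (?h x)) = complex_of_real (L * (\<Sum>n\<in>?I. (cmod (c n))\<^sup>2))"
    by (simp only: of_real_integral_norm_sq[symmetric] integral_norm_sq_trig_sum[OF L])
  also have "(LINT x:{0..L}|lborel. g x * cnj (g x)) = complex_of_real (LINT x:{0..L}|lborel. (cmod (g x))\<^sup>2)"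
    by (simp only: of_real_integral_norm_sq)
  finally have "complex_of_real (LINT x:{0..L}|lborel. (cmod (g x - ?h x))\<^sup>2)
     = complex_of_real (LINT x:{0..L}|lborel. (cmod (g x))\<^sup>2) - complex_of_real L * (\<Sum>n\<in>?I. fcoeff L g n * cnj (c n))
       - (cnj (complex_of_real L * (\<Sum>n\<in>?I. fcoeff L g n * cnj (c n))) - complex_of_real (L * (\<Sum>n\<in>?I. (cmod (c n))\<^sup>2)))"
    by simp
  also have "\<dots> = complex_of_real ((LINT x:{0..L}|lborel. (cmod (g x))\<^sup>2) - L * (\<Sum>n\<in>?I. (cmod (fcoeff L g n))\<^sup>2)
         + L * (\<Sum>n\<in>?I. (cmod (fcoeff L g n - c n))\<^sup>2))"
  proof -
    have "\<And>n. complex_of_real ((cmod (fcoeff L g n - c n))\<^sup>2) = complex_of_real ((cmod (fcoeff L g n))\<^sup>2) - fcoeff L g n * cnj (c n) - cnj (fcoeff L g n * cnj (c n)) + complex_of_real ((cmod (c n))\<^sup>2)"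
      by (simp only: complex_norm_square) (simp add: algebra_simps)
    hence e: "(\<Sum>n\<in>?I. complex_of_real ((cmod (fcoeff L g n - c n))\<^sup>2)) = (\<Sum>n\<in>?I. complex_of_real ((cmod (fcoeff L g n))\<^sup>2)) - (\<Sum>n\<in>?I. fcoeff L g n * cnj (c n)) - (\<Sum>n\<in>?I. cnj (fcoeff L g n * cnj (c n))) + (\<Sum>n\<in>?I. complex_of_real ((cmod (c n))\<^sup>2))"
      by (simp add: sum.distrib sum_subtractf)
    show ?thesis
      by (simp only: of_real_add of_real_diff of_real_mult of_real_sum e cnj_sum complex_cnj_mult complex_cnj_complex_of_real)
         (simp add: algebra_simps)
  qed
  finally show ?thesis by (simp only: of_real_eq_iff)
qed

lemma bessel_inequality:
  assumes L: "L > 0" and g: "sq_integrable {0..L} g"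
  shows "L * (\<Sum>n\<in>{-int N..int N}. (cmod (fcoeff L g n))\<^sup>2) \<le> (LINT x:{0..L}|lborel. (cmod (g x))\<^sup>2)"
  using integral_norm_sq_diff_trig_sum[OF L g, of N "fcoeff L g"] set_integral_nonneg[of "{0..L}" "\<lambda>x. (cmod (g x - trig_sum L N (fcoeff L g) x))\<^sup>2" lborel]
  by simp

lemma integral_norm_sq_diff_partial_sum:
  assumes L: "L > 0" and g: "sq_integrable {0..L} g"
  shows "(LINT x:{0..L}|lborel. (cmod (g x - trig_sum L N (fcoeff L g) x))\<^sup>2)
       = (LINT x:{0..L}|lborel. (cmod (g x))\<^sup>2) - L * (\<Sum>n\<in>{-int N..int N}. (cmod (fcoeff L g n))\<^sup>2)"
  using integral_norm_sq_diff_trig_sum[OF L g, of N "fcoeff L g"] by simp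

lemma partial_sum_best_approx:
  assumes L: "L > 0" and g: "sq_integrable {0..L} g"
  shows "(LINT x:{0..L}|lborel. (cmod (g x))\<^sup>2) - L * (\<Sum>n\<in>{-int N..int N}. (cmod (fcoeff L g n))\<^sup>2)
       \<le> (LINT x:{0..L}|lborel. (cmod (g x - trig_sum L N c x))\<^sup>2)"
  using integral_norm_sq_diff_trig_sum[OF L g, of N c] L by (simp add: sum_nonneg)

lemma fcoeff_diff:
  assumes L: "L > 0" and g: "sq_integrable {0..L} g" and h: "sq_integrable {0..L} h"
  shows "fcoeff L (\<lambda>x. g x - h x) n = fcoeff L g n - fcoeff L h n"
proof -
  have "(LINT x:{0..L}|lborel. (g x - h x) * cnj (fmode L n x)) = (LINT x:{0..L}|lborel. g x * cnj (fmode L n x)) - (LINT x:{0..L}|lborel. h x * cnj (fmode L n x))"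
    unfolding left_diff_distrib
    by (rule set_integral_diff(2); intro set_integrable_mult_sq_integrable g h sq_integrable_cnj_fmode) auto
  thus ?thesis unfolding fcoeff_def by (simp add: diff_divide_distrib)
qed

lemma fcoeff_norm_sq_le:
  assumes L: "L > 0" and g: "sq_integrable {0..L} g"
  shows "L * (cmod (fcoeff L g n))\<^sup>2 \<le> (LINT x:{0..L}|lborel. (cmod (g x))\<^sup>2)"
proof -
  have "(cmod (fcoeff L g n))\<^sup>2 \<le> (\<Sum>k\<in>{-int (nat \<bar>n\<bar>)..int (nat \<bar>n\<bar>)}. (cmod (fcoeff L g k))\<^sup>2)"
    by (rule member_le_sum) auto
  hence "L * (cmod (fcoeff L g n))\<^sup>2 \<le> L * (\<Sum>k\<in>{-int (nat \<bar>n\<bar>)..int (nat \<bar>n\<bar>)}. (cmod (fcoeff L g k))\<^sup>2)"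
    using L by simp
  also have "\<dots> \<le> (LINT x:{0..L}|lborel. (cmod (g x))\<^sup>2)" by (rule bessel_inequality[OF L g])
  finally show ?thesis .
qed

section \<open>The space of periodic \<open>H\<^sup>2\<close> functions\<close>

lemma continuous_on_trig_poly: "trig_poly L q \<Longrightarrow> continuous_on UNIV q"
  using trig_poly_imp_trig_sum continuous_on_trig_sum by metis

lemma trig_poly_measurable: "trig_poly L q \<Longrightarrow> q \<in> borel_measurable borel"
  by (rule borel_measurable_continuous_onI, rule continuous_on_trig_poly)

lemma trig_poly_periodic: "trig_poly L q \<Longrightarrow> L > 0 \<Longrightarrow> q (x + L) = q x"
  using trig_poly_imp_trig_sum trig_sum_periodic by metis

lemma trig_poly_shift: "trig_poly L q \<Longrightarrow> trig_poly L (\<lambda>x. q (x + c))"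
proof -
  assume "trig_poly L q"
  then obtain N a where q: "q = trig_sum L N a" using trig_poly_imp_trig_sum by blast
  have "(\<lambda>x. q (x + c)) = trig_sum L N (\<lambda>n. a n * fmode L n c)" unfolding q by (rule ext) (rule trig_sum_shift)
  thus ?thesis by (simp add: trig_poly_trig_sum)
qed

lemma trig_poly_diff:
  assumes "trig_poly L q1" "trig_poly L q2" shows "trig_poly L (\<lambda>x. q1 x - q2 x)"
proof -
  obtain N1 a where q1: "q1 = trig_sum L N1 a" using trig_poly_imp_trig_sum assms(1) by blast
  obtain N2 b where q2: "q2 = trig_sum L N2 b" using trig_poly_imp_trig_sum assms(2) by blast
  define a' where "a' n = (if \<bar>n\<bar> \<le> int N1 then a n else 0)" for n
  define b' where "b' n = (if \<bar>n\<bar> \<le> int N2 then b n else 0)" for n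
  have "q1 = trig_sum L (max N1 N2) a'" unfolding q1 a'_def by (rule trig_sum_extend) simp
  moreover have "q2 = trig_sum L (max N1 N2) b'" unfolding q2 b'_def by (rule trig_sum_extend) simp
  ultimately have "(\<lambda>x. q1 x - q2 x) = trig_sum L (max N1 N2) (\<lambda>n. a' n - b' n)"
    by (simp only: trig_sum_diff)
  thus ?thesis by (simp add: trig_poly_trig_sum)
qed

lemma h2approx_window_tendsto:
  assumes h: "h2approx L f p" and fm: "f \<in> borel_measurable borel"
  shows "eventually (\<lambda>m. set_integrable lborel {a..a+L} (\<lambda>x. (cmod (p m x - complex_of_real (f x)))\<^sup>2)) sequentially"
    and "(\<lambda>m. LINT x:{a..a+L}|lborel. (cmod (p m x - complex_of_real (f x)))\<^sup>2) \<longlonglongrightarrow> 0"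
proof -
  have poly: "\<And>m. trig_poly L (p m)" using h by (simp add: h2approx_def)
  have lim: "(\<lambda>m. \<integral>\<^sup>+ x. ennreal ((cmod (p m x - complex_of_real (f x)))\<^sup>2) * indicator {a..a+L} x \<partial>lborel) \<longlonglongrightarrow> 0"
    using h by (simp add: h2approx_def)
  have meas: "(\<lambda>x. (cmod (p m x - complex_of_real (f x)))\<^sup>2) \<in> borel_measurable borel" for m
  proof -
    have [measurable]: "p m \<in> borel_measurable borel" "f \<in> borel_measurable borel"
      using trig_poly_measurable[OF poly] fm by auto
    show ?thesis by measurable
  qed
  show "eventually (\<lambda>m. set_integrable lborel {a..a+L} (\<lambda>x. (cmod (p m x - complex_of_real (f x)))\<^sup>2)) sequentially"
    by (rule nn_integral_tendsto_0_imp_set_integral(1)[OF meas _ _ lim]) auto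
  show "(\<lambda>m. LINT x:{a..a+L}|lborel. (cmod (p m x - complex_of_real (f x)))\<^sup>2) \<longlonglongrightarrow> 0"
    by (rule nn_integral_tendsto_0_imp_set_integral(2)[OF meas _ _ lim]) auto
qed

lemma h2approx_sq_integrable:
  assumes h: "h2approx L f p" and fm: "f \<in> borel_measurable borel"
  shows "sq_integrable {a..a+L} (\<lambda>x. complex_of_real (f x))"
proof -
  have poly: "\<And>m. trig_poly L (p m)" using h by (simp add: h2approx_def)
  obtain m where m: "set_integrable lborel {a..a+L} (\<lambda>x. (cmod (p m x - complex_of_real (f x)))\<^sup>2)"
    using eventually_happens'[OF _ h2approx_window_tendsto(1)[OF h fm, of a]] by auto
  have s1: "sq_integrable {a..a+L} (\<lambda>x. p m x - complex_of_real (f x))"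
  proof -
    have [measurable]: "p m \<in> borel_measurable borel" "f \<in> borel_measurable borel"
      using trig_poly_measurable[OF poly] fm by auto
    have "(\<lambda>x. p m x - complex_of_real (f x)) \<in> borel_measurable borel" by measurable
    thus ?thesis using m by (simp add: sq_integrable_def)
  qed
  have s2: "sq_integrable {a..a+L} (p m)" by (rule sq_integrable_continuous, rule continuous_on_trig_poly[OF poly])
  have "sq_integrable {a..a+L} (\<lambda>x. p m x - (p m x - complex_of_real (f x)))"
    by (rule sq_integrable_diff[OF s2 s1]) auto
  thus ?thesis by simp
qed

lemma H2per_sq_integrable: "H2per L f \<Longrightarrow> sq_integrable {a..a+L} (\<lambda>x. complex_of_real (f x))"
  unfolding H2per_def using h2approx_sq_integrable by blast

lemma h2approx_fcoeff_tendsto: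
  assumes L: "L > 0" and h: "h2approx L f p" and fm: "f \<in> borel_measurable borel"
  shows "(\<lambda>m. fcoeff L (p m) n) \<longlonglongrightarrow> fcoeff L (\<lambda>x. complex_of_real (f x)) n"
proof -
  have poly: "\<And>m. trig_poly L (p m)" using h by (simp add: h2approx_def)
  have fs: "sq_integrable {0..L} (\<lambda>x. complex_of_real (f x))" using h2approx_sq_integrable[OF h fm, of 0] by simp
  have ps: "sq_integrable {0..L} (p m)" for m by (rule sq_integrable_continuous, rule continuous_on_trig_poly[OF poly])
  have lim: "(\<lambda>m. LINT x:{0..L}|lborel. (cmod (p m x - complex_of_real (f x)))\<^sup>2) \<longlonglongrightarrow> 0"
    using h2approx_window_tendsto(2)[OF h fm, of 0] by simp
  have bd: "norm (fcoeff L (p m) n - fcoeff L (\<lambda>x. complex_of_real (f x)) n) \<le> sqrt ((LINT x:{0..L}|lborel. (cmod (p m x - complex_of_real (f x)))\<^sup>2) / L)" for m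
  proof -
    have d: "sq_integrable {0..L} (\<lambda>x. p m x - complex_of_real (f x))" by (rule sq_integrable_diff[OF ps fs]) auto
    have "L * (cmod (fcoeff L (\<lambda>x. p m x - complex_of_real (f x)) n))\<^sup>2 \<le> (LINT x:{0..L}|lborel. (cmod (p m x - complex_of_real (f x)))\<^sup>2)"
      by (rule fcoeff_norm_sq_le[OF L d])
    hence "(cmod (fcoeff L (p m) n - fcoeff L (\<lambda>x. complex_of_real (f x)) n))\<^sup>2 \<le> (LINT x:{0..L}|lborel. (cmod (p m x - complex_of_real (f x)))\<^sup>2) / L"
      using L by (simp add: fcoeff_diff[OF L ps fs] field_simps)
    thus ?thesis by (simp add: real_le_rsqrt)
  qed
  have "(\<lambda>m. (LINT x:{0..L}|lborel. (cmod (p m x - complex_of_real (f x)))\<^sup>2) / L) \<longlonglongrightarrow> 0 / L"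
    by (rule tendsto_divide[OF lim tendsto_const]) (use L in simp)
  hence "(\<lambda>m. sqrt ((LINT x:{0..L}|lborel. (cmod (p m x - complex_of_real (f x)))\<^sup>2) / L)) \<longlonglongrightarrow> sqrt (0 / L)"
    by (rule tendsto_real_sqrt)
  hence z: "(\<lambda>m. sqrt ((LINT x:{0..L}|lborel. (cmod (p m x - complex_of_real (f x)))\<^sup>2) / L)) \<longlonglongrightarrow> 0"
    by simp
  have "(\<lambda>m. fcoeff L (p m) n - fcoeff L (\<lambda>x. complex_of_real (f x)) n) \<longlonglongrightarrow> 0"
    by (rule Lim_null_comparison[OF always_eventually[OF allI[OF bd]] z])
  thus ?thesis by (simp add: LIM_zero_iff)
qed

lemma parseval_h2approx:
  assumes L: "L > 0" and h: "h2approx L f p" and fm: "f \<in> borel_measurable borel"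
  shows "(\<lambda>N::nat. L * (\<Sum>n\<in>{-int N..int N}. (cmod (fcoeff L (\<lambda>x. complex_of_real (f x)) n))\<^sup>2))
           \<longlonglongrightarrow> (LINT x:{0..L}|lborel. (f x)\<^sup>2)"
proof (rule LIMSEQ_I)
  fix r :: real assume r: "0 < r"
  let ?g = "\<lambda>x. complex_of_real (f x)"
  let ?X = "\<lambda>N::nat. L * (\<Sum>n\<in>{-int N..int N}. (cmod (fcoeff L ?g n))\<^sup>2)"
  have poly: "\<And>m. trig_poly L (p m)" using h by (simp add: h2approx_def)
  have gs: "sq_integrable {0..L} ?g" using h2approx_sq_integrable[OF h fm, of 0] by simp
  have F: "(LINT x:{0..L}|lborel. (cmod (?g x))\<^sup>2) = (LINT x:{0..L}|lborel. (f x)\<^sup>2)"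
    by simp
  have lim: "(\<lambda>m. LINT x:{0..L}|lborel. (cmod (p m x - ?g x))\<^sup>2) \<longlonglongrightarrow> 0"
    using h2approx_window_tendsto(2)[OF h fm, of 0] by simp
  obtain m where m: "(LINT x:{0..L}|lborel. (cmod (p m x - ?g x))\<^sup>2) < r"
    using order_tendstoD(2)[OF lim r] by (meson eventually_sequentially order_refl)
  obtain N0 c where pm: "p m = trig_sum L N0 c" using trig_poly_imp_trig_sum[OF poly[of m]] by blast
  show "\<exists>no. \<forall>N\<ge>no. norm (?X N - (LINT x:{0..L}|lborel. (f x)\<^sup>2)) < r"
  proof (intro exI allI impI)
    fix N assume N: "N0 \<le> N"
    let ?c = "\<lambda>n. if \<bar>n\<bar> \<le> int N0 then c n else 0"
    have "(LINT x:{0..L}|lborel. (cmod (?g x))\<^sup>2) - ?X N \<le> (LINT x:{0..L}|lborel. (cmod (?g x - trig_sum L N ?c x))\<^sup>2)"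
      by (rule partial_sum_best_approx[OF L gs])
    also have "\<dots> = (LINT x:{0..L}|lborel. (cmod (p m x - ?g x))\<^sup>2)"
      unfolding pm trig_sum_extend[OF N, of L c] by (simp add: norm_minus_commute)
    finally have lo: "(LINT x:{0..L}|lborel. (f x)\<^sup>2) - ?X N < r" using m F by linarith
    have up: "?X N \<le> (LINT x:{0..L}|lborel. (f x)\<^sup>2)" using bessel_inequality[OF L gs, of N] F by linarith
    show "norm (?X N - (LINT x:{0..L}|lborel. (f x)\<^sup>2)) < r" using lo up r by simp
  qed
qed

lemma sum_restrict_le:
  fixes t :: "int \<Rightarrow> real"
  assumes "\<And>n. 0 \<le> t n"
  shows "(\<Sum>n\<in>{-int K..int K}. (if \<bar>n\<bar> \<le> int N then t n else 0)) \<le> (\<Sum>n\<in>{-int N..int N}. t n)"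
proof -
  have "(\<Sum>n\<in>{-int K..int K}. (if \<bar>n\<bar> \<le> int N then t n else 0)) = (\<Sum>n\<in>{-int K..int K}. (if n \<in> {-int N..int N} then t n else 0))"
    by (intro sum.cong) auto
  also have "\<dots> = (\<Sum>n\<in>{-int K..int K} \<inter> {-int N..int N}. t n)"
    by (rule sum.inter_restrict[symmetric]) simp
  also have "\<dots> \<le> (\<Sum>n\<in>{-int N..int N}. t n)"
    by (rule sum_mono2) (auto simp: assms)
  finally show ?thesis .
qed

lemma h2approx_weighted_coeff_sum_le:
  assumes L: "L > 0" and h: "h2approx L f p" and fm: "f \<in> borel_measurable borel"
    and w: "\<And>n. 0 \<le> w n"
    and B: "\<And>m N c. p m = trig_sum L N c \<Longrightarrow> L * (\<Sum>n\<in>{-int N..int N}. w n * (cmod (c n))\<^sup>2) \<le> B"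
  shows "L * (\<Sum>n\<in>{-int K..int K}. w n * (cmod (fcoeff L (\<lambda>x. complex_of_real (f x)) n))\<^sup>2) \<le> B"
proof -
  have poly: "\<And>m. trig_poly L (p m)" using h by (simp add: h2approx_def)
  have lim: "(\<lambda>m. L * (\<Sum>n\<in>{-int K..int K}. w n * (cmod (fcoeff L (p m) n))\<^sup>2))
      \<longlonglongrightarrow> L * (\<Sum>n\<in>{-int K..int K}. w n * (cmod (fcoeff L (\<lambda>x. complex_of_real (f x)) n))\<^sup>2)"
    by (intro tendsto_intros h2approx_fcoeff_tendsto[OF L h fm])
  have "L * (\<Sum>n\<in>{-int K..int K}. w n * (cmod (fcoeff L (p m) n))\<^sup>2) \<le> B" for m
  proof -
    obtain N c where pm: "p m = trig_sum L N c" using trig_poly_imp_trig_sum[OF poly[of m]] by blast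
    have "(\<Sum>n\<in>{-int K..int K}. w n * (cmod (fcoeff L (p m) n))\<^sup>2)
        = (\<Sum>n\<in>{-int K..int K}. (if \<bar>n\<bar> \<le> int N then w n * (cmod (c n))\<^sup>2 else 0))"
      unfolding pm fcoeff_trig_sum[OF L] by (intro sum.cong) auto
    also have "\<dots> \<le> (\<Sum>n\<in>{-int N..int N}. w n * (cmod (c n))\<^sup>2)"
      by (rule sum_restrict_le) (simp add: w)
    finally have "L * (\<Sum>n\<in>{-int K..int K}. w n * (cmod (fcoeff L (p m) n))\<^sup>2) \<le> L * (\<Sum>n\<in>{-int N..int N}. w n * (cmod (c n))\<^sup>2)"
      using L by simp
    also have "\<dots> \<le> B" by (rule B[OF pm])
    finally show ?thesis .
  qed
  thus ?thesis by (intro LIMSEQ_le_const2[OF lim]) auto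
qed

lemma norm_sq_ii_power2_mult: "(cmod ((\<i> * complex_of_real r) ^ 2 * z))\<^sup>2 = r ^ 4 * (cmod z)\<^sup>2"
  by (simp add: norm_mult norm_power power_mult_distrib flip: power_mult)

lemma h2approx_bounds:
  assumes L: "L > 0" and h: "h2approx L f p" and fm: "f \<in> borel_measurable borel"
    and B: "\<And>m. h2norm L (p m) \<le> B"
  shows "(LINT x:{0..L}|lborel. (f x)\<^sup>2) \<le> B\<^sup>2"
    and "L * (\<Sum>n\<in>{-int K..int K}. (freq L * of_int n) ^ 4 * (cmod (fcoeff L (\<lambda>x. complex_of_real (f x)) n))\<^sup>2) \<le> B\<^sup>2"
proof -
  have hB: "(h2norm L (p m))\<^sup>2 \<le> B\<^sup>2" for m
    using B[of m] h2norm_nonneg[of L "p m"] by (intro power_mono) auto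
  have b1: "L * (\<Sum>n\<in>{-int K..int K}. 1 * (cmod (fcoeff L (\<lambda>x. complex_of_real (f x)) n))\<^sup>2) \<le> B\<^sup>2" for K
  proof (rule h2approx_weighted_coeff_sum_le[OF L h fm])
    fix m N c assume pm: "p m = trig_sum L N c"
    show "L * (\<Sum>n\<in>{-int N..int N}. 1 * (cmod (c n))\<^sup>2) \<le> B\<^sup>2"
      using h2norm_trig_sum_ge(2)[OF L, where N=N and c=c] hB[of m] pm by simp
  qed simp
  show "L * (\<Sum>n\<in>{-int K..int K}. (freq L * of_int n) ^ 4 * (cmod (fcoeff L (\<lambda>x. complex_of_real (f x)) n))\<^sup>2) \<le> B\<^sup>2"
  proof (rule h2approx_weighted_coeff_sum_le[OF L h fm])
    fix m N c assume pm: "p m = trig_sum L N c"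
    show "L * (\<Sum>n\<in>{-int N..int N}. (freq L * of_int n) ^ 4 * (cmod (c n))\<^sup>2) \<le> B\<^sup>2"
    proof -
      have e: "(\<Sum>n\<in>{-int N..int N}. (cmod ((\<i> * complex_of_real (freq L * of_int n)) ^ 2 * c n))\<^sup>2)
          = (\<Sum>n\<in>{-int N..int N}. (freq L * of_int n) ^ 4 * (cmod (c n))\<^sup>2)"
        by (simp only: norm_sq_ii_power2_mult)
      show ?thesis using h2norm_trig_sum_ge(1)[OF L, where N=N and c=c] hB[of m] pm unfolding e by simp
    qed
  qed simp
  show "(LINT x:{0..L}|lborel. (f x)\<^sup>2) \<le> B\<^sup>2"
    by (rule LIMSEQ_le_const2[OF parseval_h2approx[OF L h fm]]) (use b1 in auto)
qed

lemma freq_pos: "L > 0 \<Longrightarrow> freq L > 0"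
  by (simp add: freq_def)

lemma sum_tail_le_weighted:
  fixes a :: "int \<Rightarrow> real" and w :: real
  assumes w: "w > 0" and N: "N \<ge> 1" and K: "N \<le> K" and a: "\<And>n. 0 \<le> a n"
  shows "(\<Sum>n\<in>{-int K..int K}. a n) - (\<Sum>n\<in>{-int N..int N}. a n)
    \<le> (\<Sum>n\<in>{-int K..int K}. (w * of_int n) ^ 4 * a n) / (w * real N) ^ 4"
proof -
  have wN: "(w * real N) ^ 4 > 0" using w N by simp
  have sub: "{-int N..int N} \<subseteq> {-int K..int K}" using K by auto
  have "(\<Sum>n\<in>{-int K..int K}. a n) - (\<Sum>n\<in>{-int N..int N}. a n) = (\<Sum>n\<in>{-int K..int K} - {-int N..int N}. a n)"
    using sum.subset_diff[OF sub, of a] by simp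
  also have "\<dots> \<le> (\<Sum>n\<in>{-int K..int K} - {-int N..int N}. (w * of_int n) ^ 4 * a n / (w * real N) ^ 4)"
  proof (rule sum_mono)
    fix n assume "n \<in> {-int K..int K} - {-int N..int N}"
    hence "w * real N \<le> \<bar>w * of_int n\<bar>" using w by (auto simp: abs_mult)
    hence "(w * real N) ^ 4 \<le> \<bar>w * of_int n\<bar> ^ 4" using w by (intro power_mono) auto
    hence "(w * real N) ^ 4 * a n \<le> (w * of_int n) ^ 4 * a n"
      using a[of n] by (simp add: power_even_abs mult_right_mono)
    thus "a n \<le> (w * of_int n) ^ 4 * a n / (w * real N) ^ 4" by (simp only: pos_le_divide_eq[OF wN] mult.commute)
  qed
  also have "\<dots> = (\<Sum>n\<in>{-int K..int K} - {-int N..int N}. (w * of_int n) ^ 4 * a n) / (w * real N) ^ 4"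
    by (simp add: sum_divide_distrib)
  also have "\<dots> \<le> (\<Sum>n\<in>{-int K..int K}. (w * of_int n) ^ 4 * a n) / (w * real N) ^ 4"
    using wN a by (intro divide_right_mono sum_mono2) auto
  finally show ?thesis .
qed

lemma h2approx_tail_bound:
  assumes L: "L > 0" and h: "h2approx L f p" and fm: "f \<in> borel_measurable borel"
    and B: "\<And>m. h2norm L (p m) \<le> B" and N: "N \<ge> 1"
  shows "(LINT x:{0..L}|lborel. (f x)\<^sup>2) - L * (\<Sum>n\<in>{-int N..int N}. (cmod (fcoeff L (\<lambda>x. complex_of_real (f x)) n))\<^sup>2)
         \<le> B\<^sup>2 / (freq L * real N) ^ 4"
proof -
  let ?a = "\<lambda>n. (cmod (fcoeff L (\<lambda>x. complex_of_real (f x)) n))\<^sup>2"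
  let ?S = "\<lambda>K::nat. L * (\<Sum>n\<in>{-int K..int K}. ?a n)"
  have "?S K - ?S N \<le> B\<^sup>2 / (freq L * real N) ^ 4" if K: "K \<ge> N" for K
  proof -
    have "?S K - ?S N \<le> L * ((\<Sum>n\<in>{-int K..int K}. (freq L * of_int n) ^ 4 * ?a n) / (freq L * real N) ^ 4)"
      using mult_left_mono[OF sum_tail_le_weighted[OF freq_pos[OF L] N K, of ?a], of L] L
      by (simp add: right_diff_distrib)
    also have "\<dots> \<le> B\<^sup>2 / (freq L * real N) ^ 4"
      using h2approx_bounds(2)[OF L h fm B, of K] freq_pos[OF L] N by (simp add: divide_right_mono)
    finally show ?thesis .
  qed
  moreover have "(\<lambda>K. ?S K - ?S N) \<longlonglongrightarrow> (LINT x:{0..L}|lborel. (f x)\<^sup>2) - ?S N"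
    by (intro tendsto_diff parseval_h2approx[OF L h fm] tendsto_const)
  ultimately show ?thesis
    by (intro LIMSEQ_le_const2) auto
qed

lemma set_integrable_sq_diff_shift:
  fixes f :: "real \<Rightarrow> real"
  assumes [measurable]: "f \<in> borel_measurable borel"
    and f1: "set_integrable lborel {a..b} (\<lambda>x. (f x)\<^sup>2)" and f2: "set_integrable lborel {a+c..b+c} (\<lambda>x. (f x)\<^sup>2)"
  shows "set_integrable lborel {a..b} (\<lambda>x. (f (x + c) - f x)\<^sup>2)"
proof -
  have "set_integrable lborel {a..b} (\<lambda>x. (f (x + c))\<^sup>2)"
    using f2 set_integrable_translate[where h="\<lambda>x. (f x)\<^sup>2" and a=a and b=b and s=c] by simp
  hence "set_integrable lborel {a..b} (\<lambda>x. 2 * (f (x + c))\<^sup>2 + 2 * (f x)\<^sup>2)"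
    using f1 by (intro set_integral_add set_integrable_mult_right)
  thus ?thesis
  proof (rule set_integrable_bound)
    show "set_borel_measurable lborel {a..b} (\<lambda>x. (f (x + c) - f x)\<^sup>2)"
      by (intro set_borel_measurable_borel) auto
    show "AE x\<in>{a..b} in lborel. norm ((f (x + c) - f x)\<^sup>2) \<le> norm (2 * (f (x + c))\<^sup>2 + 2 * (f x)\<^sup>2)"
    proof (intro AE_I2 impI)
      fix x
      have "(f (x + c) - f x)\<^sup>2 \<le> 2 * (f (x + c))\<^sup>2 + 2 * (f x)\<^sup>2"
        using sum_squares_bound[of "- f (x + c)" "f x"] by (simp add: power2_diff)
      then show "norm ((f (x + c) - f x)\<^sup>2) \<le> norm (2 * (f (x + c))\<^sup>2 + 2 * (f x)\<^sup>2)" by simp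
    qed
  qed
qed

lemma window_shift_diff_sq_le:
  fixes f :: "real \<Rightarrow> real"
  assumes L: "L > 0" and q: "trig_poly L q" and fm: "f \<in> borel_measurable borel"
    and D: "set_integrable lborel {a..a+L} (\<lambda>x. (f (x + L) - f x)\<^sup>2)"
    and e1: "set_integrable lborel {a+L..a+L+L} (\<lambda>x. (cmod (q x - complex_of_real (f x)))\<^sup>2)"
    and e2: "set_integrable lborel {a..a+L} (\<lambda>x. (cmod (q x - complex_of_real (f x)))\<^sup>2)"
  shows "(LINT x:{a..a+L}|lborel. (f (x + L) - f x)\<^sup>2)
    \<le> 2 * (LINT x:{a+L..a+L+L}|lborel. (cmod (q x - complex_of_real (f x)))\<^sup>2)
      + 2 * (LINT x:{a..a+L}|lborel. (cmod (q x - complex_of_real (f x)))\<^sup>2)"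
proof -
  let ?e = "\<lambda>x. (cmod (q x - complex_of_real (f x)))\<^sup>2"
  have i1: "set_integrable lborel {a..a+L} (\<lambda>x. ?e (x + L))"
    using e1 unfolding set_integrable_translate[where h="?e"] by (simp add: add.commute add.left_commute)
  have "(LINT x:{a..a+L}|lborel. (f (x + L) - f x)\<^sup>2) \<le> (LINT x:{a..a+L}|lborel. 2 * ?e (x + L) + 2 * ?e x)"
  proof (rule set_integral_mono[OF D])
    show "set_integrable lborel {a..a+L} (\<lambda>x. 2 * ?e (x + L) + 2 * ?e x)"
      using i1 e2 by (intro set_integral_add set_integrable_mult_right)
    fix x
    have "complex_of_real (f (x + L) - f x) = (q x - complex_of_real (f x)) - (q (x + L) - complex_of_real (f (x + L)))"
      using trig_poly_periodic[OF q L, of x] by simp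
    hence "(f (x + L) - f x)\<^sup>2 = (cmod ((q x - complex_of_real (f x)) - (q (x + L) - complex_of_real (f (x + L)))))\<^sup>2"
      by (metis norm_of_real real_norm_def power2_abs)
    also have "\<dots> \<le> (cmod (q (x + L) - complex_of_real (f (x + L))) + cmod (q x - complex_of_real (f x)))\<^sup>2"
      by (intro power_mono) (auto intro: order_trans[OF norm_triangle_ineq4] simp: add.commute)
    also have "\<dots> \<le> 2 * ?e (x + L) + 2 * ?e x"
      using sum_squares_bound[of "cmod (q (x + L) - complex_of_real (f (x + L)))" "cmod (q x - complex_of_real (f x))"]
      by (simp add: power2_sum)
    finally show "(f (x + L) - f x)\<^sup>2 \<le> 2 * ?e (x + L) + 2 * ?e x" .
  qed
  also have "\<dots> = 2 * (LINT x:{a..a+L}|lborel. ?e (x + L)) + 2 * (LINT x:{a..a+L}|lborel. ?e x)"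
    using i1 e2 by simp
  also have "(LINT x:{a..a+L}|lborel. ?e (x + L)) = (LINT x:{a+L..a+L+L}|lborel. ?e x)"
    using set_integral_translate[where h="?e" and a=a and b="a+L" and s=L] by (simp add: add_ac)
  finally show ?thesis .
qed

lemma h2approx_periodic_window:
  assumes L: "L > 0" and h: "h2approx L f p" and fm: "f \<in> borel_measurable borel"
  shows "AE x in lborel. x \<in> {a..a+L} \<longrightarrow> f (x + L) = f x"
proof -
  have q: "\<And>m. trig_poly L (p m)" using h by (simp add: h2approx_def)
  define D where "D x = (f (x + L) - f x)\<^sup>2" for x
  define e where "e m b = (LINT x:{b..b+L}|lborel. (cmod (p m x - complex_of_real (f x)))\<^sup>2)" for m b
  have Dint: "set_integrable lborel {a..a+L} D"
    unfolding D_def using h2approx_sq_integrable[OF h fm, of a] h2approx_sq_integrable[OF h fm, of "a + L"]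
    by (intro set_integrable_sq_diff_shift[OF fm]) (auto simp: sq_integrable_of_real add_ac)
  have "eventually (\<lambda>m. (LINT x:{a..a+L}|lborel. D x) \<le> 2 * e m (a + L) + 2 * e m a) sequentially"
    using h2approx_window_tendsto(1)[OF h fm, of "a + L"] h2approx_window_tendsto(1)[OF h fm, of a]
    by eventually_elim (unfold D_def e_def, rule window_shift_diff_sq_le[OF L q fm Dint[unfolded D_def]])
  moreover have "(\<lambda>m. 2 * e m (a + L) + 2 * e m a) \<longlonglongrightarrow> 2 * 0 + 2 * 0"
    unfolding e_def by (intro tendsto_add tendsto_mult tendsto_const h2approx_window_tendsto(2)[OF h fm])
  ultimately have "(LINT x:{a..a+L}|lborel. D x) \<le> 0"
    by (intro tendsto_lowerbound) (auto simp: trivial_limit_sequentially)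
  moreover have "0 \<le> (LINT x:{a..a+L}|lborel. D x)" by (rule set_integral_nonneg) (simp add: D_def)
  ultimately have z: "(LINT x|lborel. indicator {a..a+L} x *\<^sub>R D x) = 0" unfolding set_lebesgue_integral_def by simp
  have "AE x in lborel. indicator {a..a+L} x *\<^sub>R D x = 0"
    using integral_nonneg_eq_0_iff_AE[OF Dint[unfolded set_integrable_def]] z by (simp add: D_def indicator_def)
  thus ?thesis by (rule AE_mp) (auto intro!: AE_I2 simp: D_def indicator_def)
qed

lemma h2approx_periodic:
  assumes L: "L > 0" and h: "h2approx L f p" and fm: "f \<in> borel_measurable borel"
  shows "AE x in lborel. f (x + L) = f x"
proof -
  have "AE x in lborel. \<forall>k::int. x \<in> {real_of_int k * L..real_of_int k * L + L} \<longrightarrow> f (x + L) = f x"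
    unfolding AE_all_countable by (intro allI h2approx_periodic_window[OF L h fm])
  thus ?thesis
  proof (rule AE_mp, intro AE_I2 impI)
    fix x assume a: "\<forall>k::int. x \<in> {real_of_int k * L..real_of_int k * L + L} \<longrightarrow> f (x + L) = f x"
    let ?k = "\<lfloor>x / L\<rfloor>"
    have k1: "real_of_int ?k \<le> x / L" and k2: "x / L < real_of_int ?k + 1" by linarith+
    have "real_of_int ?k * L \<le> x / L * L" using mult_right_mono[OF k1, of L] L by simp
    hence "real_of_int ?k * L \<le> x" using L by simp
    moreover have "x / L * L \<le> (real_of_int ?k + 1) * L" using mult_right_mono[OF less_imp_le[OF k2], of L] L by simp
    hence "x \<le> real_of_int ?k * L + L" using L by (simp add: distrib_right)
    ultimately have "x \<in> {real_of_int ?k * L..real_of_int ?k * L + L}" by simp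
    thus "f (x + L) = f x" using a by blast
  qed
qed

lemma H2per_periodic: "L > 0 \<Longrightarrow> H2per L f \<Longrightarrow> AE x in lborel. f (x + L) = f x"
  unfolding H2per_def using h2approx_periodic by blast

lemma h2approx_shift:
  assumes h: "h2approx L f p" and fm: "f \<in> borel_measurable borel" and L: "L > 0"
  shows "h2approx L (\<lambda>x. f (x + c)) (\<lambda>m x. p m (x + c))"
  unfolding h2approx_def
proof (intro conjI allI impI)
  have poly: "\<And>m. trig_poly L (p m)" using h by (simp add: h2approx_def)
  show "trig_poly L (\<lambda>x. p m (x + c))" for m by (rule trig_poly_shift[OF poly])
  show "\<exists>N. \<forall>m\<ge>N. \<forall>n\<ge>N. h2norm L (\<lambda>x. p m (x + c) - p n (x + c)) < e" if e: "e > 0" for e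
  proof -
    obtain N where N: "\<forall>m\<ge>N. \<forall>n\<ge>N. h2norm L (\<lambda>x. p m x - p n x) < e"
      using h e unfolding h2approx_def by blast
    have "h2norm L (\<lambda>x. p m (x + c) - p n (x + c)) = h2norm L (\<lambda>x. p m x - p n x)" for m n
      using h2norm_shift[OF trig_poly_diff[OF poly[of m] poly[of n]] L, of c] by simp
    thus ?thesis using N by auto
  qed
  show "(\<lambda>m. \<integral>\<^sup>+ x. ennreal ((cmod (p m (x + c) - complex_of_real (f (x + c))))\<^sup>2) * indicator {a..a + L} x \<partial>lborel) \<longlonglongrightarrow> 0" for a
  proof -
    have [measurable]: "f \<in> borel_measurable borel" by (rule fm)
    have eq: "(\<integral>\<^sup>+ x. ennreal ((cmod (p m (x + c) - complex_of_real (f (x + c))))\<^sup>2) * indicator {a..a + L} x \<partial>lborel)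
        = (\<integral>\<^sup>+ y. ennreal ((cmod (p m y - complex_of_real (f y)))\<^sup>2) * indicator {(a + c)..(a + c) + L} y \<partial>lborel)" for m
    proof -
      have [measurable]: "p m \<in> borel_measurable borel" by (rule trig_poly_measurable[OF poly])
      have "(\<lambda>y. ennreal ((cmod (p m y - complex_of_real (f y)))\<^sup>2)) \<in> borel_measurable borel" by measurable
      from nn_integral_translate[OF this, of c a "a + L"] show ?thesis by (simp add: add_ac)
    qed
    have "(\<lambda>m. \<integral>\<^sup>+ y. ennreal ((cmod (p m y - complex_of_real (f y)))\<^sup>2) * indicator {(a + c)..(a + c) + L} y \<partial>lborel) \<longlonglongrightarrow> 0"
      using h by (simp add: h2approx_def)
    thus ?thesis unfolding eq .
  qed
qed

lemma H2per_shift: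
  assumes H: "H2per L f" and L: "L > 0"
  shows "H2per L (\<lambda>x. f (x + c))"
proof -
  obtain p where h: "h2approx L f p" and fm: "f \<in> borel_measurable borel" using H unfolding H2per_def by blast
  have [measurable]: "f \<in> borel_measurable borel" by (rule fm)
  have "(\<lambda>x. f (x + c)) \<in> borel_measurable borel" by measurable
  thus ?thesis unfolding H2per_def using h2approx_shift[OF h fm L] by blast
qed

lemma fourier_coeff_shift:
  assumes L: "L > 0" and f: "H2per L f" and c: "\<bar>c\<bar> \<le> L"
  shows "fourier_coeff L (\<lambda>x. f (x + c)) n = fmode L n c * fourier_coeff L f n"
proof -
  define H where "H y = complex_of_real (f y) * cnj (fmode L n y)" for y
  have [measurable]: "f \<in> borel_measurable borel" using f by (simp add: H2per_def)
  have [measurable]: "(\<lambda>y. cnj (fmode L n y)) \<in> borel_measurable borel"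
    by (intro borel_measurable_continuous_onI continuous_intros)
  have Hm: "H \<in> borel_measurable borel" unfolding H_def by measurable
  have "complex_of_real (f (x + c)) * cnj (fmode L n x) = fmode L n c * H (x + c)" for x
  proof -
    have "fmode L n (x + c) = fmode L n x * fmode L n c" by (rule fmode_add)
    moreover have "fmode L n c * cnj (fmode L n c) = 1"
      using complex_norm_square[of "fmode L n c"] by simp
    ultimately show ?thesis unfolding H_def by (simp add: algebra_simps)
  qed
  hence "(LINT x:{0..L}|lborel. complex_of_real (f (x + c)) * cnj (fmode L n x))
      = fmode L n c * (LINT x:{0..L}|lborel. H (x + c))"
    by simp
  also have "(LINT x:{0..L}|lborel. H (x + c)) = (LINT x:{0..L}|lborel. H x)"
  proof (rule set_integral_shift_periodic[OF L _ Hm _ c])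
    show "AE x in lborel. H (x + L) = H x"
      using H2per_periodic[OF L f] by (rule AE_mp) (auto intro!: AE_I2 simp: H_def fmode_periodic[OF L])
    show "set_integrable lborel {a..a+L} H" for a
      unfolding H_def
      by (rule set_integrable_mult_sq_integrable[OF H2per_sq_integrable[OF f] sq_integrable_cnj_fmode]) auto
  qed
  finally show ?thesis
    unfolding fourier_coeff_eq_fcoeff fcoeff_def H_def by simp
qed

lemma fourier_coeff_shift_periodic:
  assumes L: "L > 0" and f: "H2per L f" and k: "k \<noteq> 0"
    and per: "AE x in lborel. f (x + L / of_int k) = f x"
    and n: "n \<noteq> 0" and nk: "\<bar>n\<bar> < \<bar>k\<bar>"
  shows "fourier_coeff L f n = 0"
proof -
  have [measurable]: "f \<in> borel_measurable borel" using f by (simp add: H2per_def)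
  have [measurable]: "(\<lambda>y. cnj (fmode L n y)) \<in> borel_measurable borel"
    by (intro borel_measurable_continuous_onI continuous_intros)
  have "(LINT x:{0..L}|lborel. complex_of_real (f x) * cnj (fmode L n x))
      = (LINT x:{0..L}|lborel. complex_of_real (f (x + L / of_int k)) * cnj (fmode L n x))"
    by (rule set_lebesgue_integral_cong_AE) (use per in \<open>auto elim!: AE_mp\<close>)
  hence "fourier_coeff L f n = fourier_coeff L (\<lambda>x. f (x + L / of_int k)) n"
    unfolding fourier_coeff_def exp_minus_eq_cnj_fmode by simp
  also have "\<dots> = fmode L n (L / of_int k) * fourier_coeff L f n"
    by (rule fourier_coeff_shift[OF L f abs_divide_of_int_le[OF L k]])
  finally have "(1 - fmode L n (L / of_int k)) * fourier_coeff L f n = 0"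
    by (simp add: algebra_simps)
  with fmode_ne_1[OF L k n nk] show ?thesis by simp
qed

lemma mult_le_amgm: "0 < s \<Longrightarrow> (x::real) * y \<le> (s * x\<^sup>2 + y\<^sup>2 / s) / 2"
proof -
  assume s: "0 < s"
  have "0 \<le> (s * x - y)\<^sup>2" by simp
  hence "2 * s * (x * y) \<le> s\<^sup>2 * x\<^sup>2 + y\<^sup>2" by (simp add: power2_eq_square algebra_simps)
  hence "2 * s * (x * y) / s \<le> (s\<^sup>2 * x\<^sup>2 + y\<^sup>2) / s" using s by (intro divide_right_mono) auto
  thus ?thesis using s by (simp add: power2_eq_square field_simps)
qed

lemma le_sqrt_mult_if_amgm:
  fixes A B P :: real
  assumes amgm: "\<And>s. s > 0 \<Longrightarrow> 2 * P \<le> s * A + B / s" and A: "A \<ge> 0" and B: "B \<ge> 0"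
  shows "P \<le> sqrt A * sqrt B"
proof (cases "A > 0 \<and> B > 0")
  case True
  define a b where "a = sqrt A" and "b = sqrt B"
  have "a > 0" "b > 0" "A = a\<^sup>2" "B = b\<^sup>2"
    using True A B by (auto simp: a_def b_def)
  with amgm[of "b / a"] show ?thesis
    by (simp add: a_def [symmetric] b_def [symmetric] field_simps power2_eq_square)
next
  case False
  show ?thesis
  proof (rule ccontr)
    assume "\<not> ?thesis"
    with False A B have P: "P > 0" by auto
    show False
    proof (cases "A = 0")
      case True
      have "2 * P \<le> B / ((B + 1) / P)" using amgm[of "(B + 1) / P"] P B True by simp
      also have "\<dots> < P" using P B by (simp add: field_simps)
      finally show False using P by simp
    next
      case False
      with \<open>\<not> (A > 0 \<and> B > 0)\<close> A B have "B = 0" by auto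
      with amgm[of "P / A"] P A False show False by (simp add: field_simps)
    qed
  qed
qed

lemma l2norm_diff_ge:
  fixes f g :: "real \<Rightarrow> real"
  assumes f: "f \<in> borel_measurable borel" and f2: "set_integrable lborel {0..L} (\<lambda>x. (f x)\<^sup>2)"
    and g: "g \<in> borel_measurable borel" and g2: "set_integrable lborel {0..L} (\<lambda>x. (g x)\<^sup>2)"
  shows "\<bar>l2norm L f - l2norm L g\<bar> \<le> l2norm L (\<lambda>x. f x - g x)"
proof -
  define A where "A = (LINT x:{0..L}|lborel. (f x)\<^sup>2)"
  define B where "B = (LINT x:{0..L}|lborel. (g x)\<^sup>2)"
  define P where "P = (LINT x:{0..L}|lborel. f x * g x)"
  have fg: "set_integrable lborel {0..L} (\<lambda>x. f x * g x)"
    by (rule set_integrable_real_mult[OF f g f2 g2]) simp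
  have A0: "0 \<le> A" and B0: "0 \<le> B" unfolding A_def B_def by (auto intro: set_integral_nonneg)
  have diff: "(LINT x:{0..L}|lborel. (f x - g x)\<^sup>2) = A - 2 * P + B"
  proof -
    have "(LINT x:{0..L}|lborel. (f x - g x)\<^sup>2)
        = (LINT x:{0..L}|lborel. ((f x)\<^sup>2 + (-2) * (f x * g x)) + (g x)\<^sup>2)"
      by (simp add: power2_diff algebra_simps)
    also have "\<dots> = A - 2 * P + B"
      unfolding A_def B_def P_def using f2 g2 fg by simp
    finally show ?thesis .
  qed
  have "2 * P \<le> s * A + B / s" if s: "s > 0" for s
  proof -
    have "P \<le> (LINT x:{0..L}|lborel. (s * (f x)\<^sup>2 + (g x)\<^sup>2 / s) / 2)"
      unfolding P_def using f2 g2 by (intro set_integral_mono[OF fg] mult_le_amgm[OF s]) auto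
    also have "\<dots> = (s * A + B / s) / 2"
      unfolding A_def B_def using f2 g2 by simp
    finally show ?thesis by simp
  qed
  hence "P \<le> sqrt A * sqrt B" using A0 B0 by (rule le_sqrt_mult_if_amgm)
  hence "(sqrt A - sqrt B)\<^sup>2 \<le> (LINT x:{0..L}|lborel. (f x - g x)\<^sup>2)"
    unfolding diff using A0 B0 by (simp add: power2_diff)
  hence "\<bar>sqrt A - sqrt B\<bar> \<le> sqrt (LINT x:{0..L}|lborel. (f x - g x)\<^sup>2)"
    using real_le_rsqrt[of "\<bar>sqrt A - sqrt B\<bar>"] by simp
  thus ?thesis unfolding l2norm_def A_def B_def .
qed

section \<open>Bounding the nonlinear energy flux\<close>

lemma mult_le_amgm_power4: "0 < x \<Longrightarrow> 0 \<le> y \<Longrightarrow> (x::real) * y \<le> x ^ 4 * y\<^sup>2 + 1 / x\<^sup>2"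
proof -
  assume x: "0 < x" and y: "0 \<le> y"
  have "x * y = (x\<^sup>2 * y) * (1 / x)" using x by (simp add: power2_eq_square)
  also have "\<dots> \<le> (1 * (x\<^sup>2 * y)\<^sup>2 + (1 / x)\<^sup>2 / 1) / 2" by (rule mult_le_amgm) simp
  also have "\<dots> \<le> x ^ 4 * y\<^sup>2 + 1 / x\<^sup>2"
    using x by (simp add: power_mult_distrib power2_eq_square field_simps) (simp add: power4_eq_xxxx)
  finally show ?thesis .
qed

lemma sum_norm_dcoeff_le:
  assumes L: "L > 0" and h: "h2approx L f p" and fm: "f \<in> borel_measurable borel"
    and B: "\<And>m. h2norm L (p m) \<le> B"
  shows "(\<Sum>n\<in>{-int N..int N}. cmod (dcoeff L (fcoeff L (\<lambda>x. complex_of_real (f x))) n)) \<le> B\<^sup>2 / L + (2 * real N + 1) / (freq L)\<^sup>2"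
proof -
  let ?a = "fcoeff L (\<lambda>x. complex_of_real (f x))"
  let ?w = "freq L"
  have w: "?w > 0" using freq_pos[OF L] .
  have trm: "cmod (dcoeff L ?a n) \<le> (?w * of_int n) ^ 4 * (cmod (?a n))\<^sup>2 + 1 / ?w\<^sup>2" for n
  proof (cases "n = 0")
    case True then show ?thesis by (simp add: dcoeff_def)
  next
    case False
    hence n1: "1 \<le> \<bar>real_of_int n\<bar>" by linarith
    have pos: "0 < \<bar>?w * of_int n\<bar>" using w False by simp
    have "cmod (dcoeff L ?a n) = \<bar>?w * of_int n\<bar> * cmod (?a n)" by (rule norm_dcoeff)
    also have "\<dots> \<le> \<bar>?w * of_int n\<bar> ^ 4 * (cmod (?a n))\<^sup>2 + 1 / \<bar>?w * of_int n\<bar>\<^sup>2"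
      by (rule mult_le_amgm_power4[OF pos]) simp
    also have "\<bar>?w * of_int n\<bar> ^ 4 = (?w * of_int n) ^ 4" by (rule power_even_abs) simp
    also have "1 / \<bar>?w * of_int n\<bar>\<^sup>2 \<le> 1 / ?w\<^sup>2"
    proof -
      have "?w \<le> \<bar>?w * of_int n\<bar>" using w n1 by (simp add: abs_mult)
      hence "?w\<^sup>2 \<le> \<bar>?w * of_int n\<bar>\<^sup>2" using w by (intro power_mono) auto
      thus ?thesis using w pos by (intro divide_left_mono) auto
    qed
    finally show ?thesis by simp
  qed
  have "(\<Sum>n\<in>{-int N..int N}. cmod (dcoeff L ?a n)) \<le> (\<Sum>n\<in>{-int N..int N}. (?w * of_int n) ^ 4 * (cmod (?a n))\<^sup>2 + 1 / ?w\<^sup>2)"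
    by (rule sum_mono) (rule trm)
  also have "\<dots> = (\<Sum>n\<in>{-int N..int N}. (?w * of_int n) ^ 4 * (cmod (?a n))\<^sup>2) + (2 * real N + 1) / ?w\<^sup>2"
  proof -
    have "card {-int N..int N} = 2 * N + 1" by simp
    thus ?thesis by (simp add: sum.distrib)
  qed
  also have "(\<Sum>n\<in>{-int N..int N}. (?w * of_int n) ^ 4 * (cmod (?a n))\<^sup>2) \<le> B\<^sup>2 / L"
    using h2approx_bounds(2)[OF L h fm B, of N] L by (simp add: field_simps)
  finally show ?thesis by simp
qed

lemma set_integrable_sq_mult_bounded:
  assumes F: "sq_integrable A F" and h: "h \<in> borel_measurable borel" and G: "\<And>x. cmod (h x) \<le> G"
    and A: "A \<in> sets borel"
  shows "set_integrable lborel A (\<lambda>x. (F x)\<^sup>2 * h x)"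
  using set_integrable_mult_sq_integrable[OF F sq_integrable_mult_bounded[OF F h G A] A]
  by (simp add: power2_eq_square algebra_simps)

lemma norm_integral_sq_diff_mult_le:
  assumes F: "sq_integrable A F" and g: "sq_integrable A g" and A: "A \<in> sets borel"
    and h: "h \<in> borel_measurable borel" and G: "\<And>x. cmod (h x) \<le> G" and s: "s > 0"
  shows "norm (LINT x:A|lborel. ((F x)\<^sup>2 - (g x)\<^sup>2) * h x)
    \<le> G * ((s * (LINT x:A|lborel. (cmod (F x - g x))\<^sup>2) + (LINT x:A|lborel. (cmod (F x + g x))\<^sup>2) / s) / 2)"
proof -
  have Fmg: "sq_integrable A (\<lambda>x. F x - g x)" and Fpg: "sq_integrable A (\<lambda>x. F x + g x)"
    using sq_integrable_diff[OF F g A] sq_integrable_add[OF F g A] .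
  have int: "set_integrable lborel A (\<lambda>x. ((F x)\<^sup>2 - (g x)\<^sup>2) * h x)"
    using set_integrable_sq_mult_bounded[OF F h G A] set_integrable_sq_mult_bounded[OF g h G A]
    by (simp add: left_diff_distrib)
  have "norm (((F x)\<^sup>2 - (g x)\<^sup>2) * h x) \<le> G * ((s * (cmod (F x - g x))\<^sup>2 + (cmod (F x + g x))\<^sup>2 / s) / 2)" for x
  proof -
    have "norm (((F x)\<^sup>2 - (g x)\<^sup>2) * h x) = (cmod (F x - g x) * cmod (F x + g x)) * cmod (h x)"
      by (simp add: norm_mult power2_eq_square algebra_simps flip: norm_mult)
    also have "\<dots> \<le> ((s * (cmod (F x - g x))\<^sup>2 + (cmod (F x + g x))\<^sup>2 / s) / 2) * G"
      using s by (intro mult_mono mult_le_amgm G) auto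
    finally show ?thesis by (simp add: mult.commute)
  qed
  moreover have "set_integrable lborel A
      (\<lambda>x. G * ((s * (cmod (F x - g x))\<^sup>2 + (cmod (F x + g x))\<^sup>2 / s) / 2))"
    using Fmg Fpg by (intro set_integrable_mult_right set_integrable_divide set_integral_add set_integrable_norm_sq)
  ultimately have "norm (LINT x:A|lborel. ((F x)\<^sup>2 - (g x)\<^sup>2) * h x)
      \<le> (LINT x:A|lborel. G * ((s * (cmod (F x - g x))\<^sup>2 + (cmod (F x + g x))\<^sup>2 / s) / 2))"
    by (intro order_trans[OF set_integral_norm_bound[OF int]] set_integral_mono set_integrable_norm[OF int])
  also have "\<dots> = G * ((s * (LINT x:A|lborel. (cmod (F x - g x))\<^sup>2) + (LINT x:A|lborel. (cmod (F x + g x))\<^sup>2) / s) / 2)"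
    using set_integrable_norm_sq[OF Fmg] set_integrable_norm_sq[OF Fpg] by simp
  finally show ?thesis .
qed

lemma integral_norm_sq_add_partial_sum_le:
  assumes L: "L > 0" and F: "sq_integrable {0..L} F"
  shows "(LINT x:{0..L}|lborel. (cmod (F x + trig_sum L N (fcoeff L F) x))\<^sup>2)
    \<le> 4 * (LINT x:{0..L}|lborel. (cmod (F x))\<^sup>2)"
proof -
  let ?g = "trig_sum L N (fcoeff L F)"
  have g: "sq_integrable {0..L} ?g" by (rule sq_integrable_trig_sum)
  have "(LINT x:{0..L}|lborel. (cmod (F x + ?g x))\<^sup>2)
      \<le> (LINT x:{0..L}|lborel. 2 * (cmod (F x))\<^sup>2 + 2 * (cmod (?g x))\<^sup>2)"
  proof (rule set_integral_mono)
    show "set_integrable lborel {0..L} (\<lambda>x. (cmod (F x + ?g x))\<^sup>2)"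
      using sq_integrable_add[OF F g] by (auto intro: set_integrable_norm_sq)
    show "set_integrable lborel {0..L} (\<lambda>x. 2 * (cmod (F x))\<^sup>2 + 2 * (cmod (?g x))\<^sup>2)"
      using F g by (intro set_integral_add set_integrable_mult_right set_integrable_norm_sq)
    fix x
    have "(cmod (F x + ?g x))\<^sup>2 \<le> (cmod (F x) + cmod (?g x))\<^sup>2"
      by (simp add: norm_triangle_ineq power_mono)
    also have "\<dots> \<le> 2 * (cmod (F x))\<^sup>2 + 2 * (cmod (?g x))\<^sup>2"
      using sum_squares_bound[of "cmod (F x)" "cmod (?g x)"] by (simp add: power2_sum)
    finally show "(cmod (F x + ?g x))\<^sup>2 \<le> 2 * (cmod (F x))\<^sup>2 + 2 * (cmod (?g x))\<^sup>2" .
  qed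
  also have "\<dots> = 2 * (LINT x:{0..L}|lborel. (cmod (F x))\<^sup>2) + 2 * (LINT x:{0..L}|lborel. (cmod (?g x))\<^sup>2)"
    using F g by (simp add: set_integrable_norm_sq)
  also have "(LINT x:{0..L}|lborel. (cmod (?g x))\<^sup>2) \<le> (LINT x:{0..L}|lborel. (cmod (F x))\<^sup>2)"
    unfolding integral_norm_sq_trig_sum[OF L] using bessel_inequality[OF L F, of N] .
  finally show ?thesis by simp
qed

lemma flux_bound_arith:
  fixes G E D B L w :: real
  assumes N: "N \<ge> 1" and L: "L > 0" and w: "w > 0"
    and G: "0 \<le> G" "G \<le> B\<^sup>2 / L + (2 * real N + 1) / w\<^sup>2"
    and E: "0 \<le> E" "E \<le> B\<^sup>2 / (w * real N) ^ 4" and D: "0 \<le> D" "D \<le> 4 * B\<^sup>2"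
  shows "G * (((real N)\<^sup>2 * E + D / (real N)\<^sup>2) / 2)
    \<le> (B\<^sup>2 / L + 3 / w\<^sup>2) * (B\<^sup>2 / w ^ 4 + 4 * B\<^sup>2) / (2 * real N)"
proof -
  have N1: "1 \<le> real N" using N by simp
  have "(real N)\<^sup>2 * E + D / (real N)\<^sup>2 \<le> (real N)\<^sup>2 * (B\<^sup>2 / (w * real N) ^ 4) + 4 * B\<^sup>2 / (real N)\<^sup>2"
    using E D N1 by (intro add_mono mult_left_mono divide_right_mono) auto
  also have "\<dots> = (B\<^sup>2 / w ^ 4 + 4 * B\<^sup>2) / (real N)\<^sup>2"
    using w N1 by (simp add: field_simps power2_eq_square power4_eq_xxxx)
  finally have sE: "(real N)\<^sup>2 * E + D / (real N)\<^sup>2 \<le> (B\<^sup>2 / w ^ 4 + 4 * B\<^sup>2) / (real N)\<^sup>2" .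
  have "1 * (B\<^sup>2 / L) \<le> real N * (B\<^sup>2 / L)" using N1 L by (intro mult_right_mono) auto
  moreover have "(2 * real N + 1) / w\<^sup>2 \<le> real N * (3 / w\<^sup>2)"
    using N1 w by (simp add: field_simps)
  ultimately have GN: "G \<le> real N * (B\<^sup>2 / L + 3 / w\<^sup>2)" using G(2) by (simp add: distrib_left)
  have "G * (((real N)\<^sup>2 * E + D / (real N)\<^sup>2) / 2)
      \<le> (real N * (B\<^sup>2 / L + 3 / w\<^sup>2)) * (((B\<^sup>2 / w ^ 4 + 4 * B\<^sup>2) / (real N)\<^sup>2) / 2)"
    using GN sE G E D by (intro mult_mono divide_right_mono) auto
  also have "\<dots> = (B\<^sup>2 / L + 3 / w\<^sup>2) * (B\<^sup>2 / w ^ 4 + 4 * B\<^sup>2) / (2 * real N)"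
  proof -
    have "real N * X * (Y / (real N)\<^sup>2 / 2) = X * Y / (2 * real N)" for X Y :: real
      using N1 by (simp add: power2_eq_square field_simps)
    then show ?thesis .
  qed
  finally show ?thesis .
qed

lemma nonlinear_flux_bound:
  assumes L: "L > 0" and h: "h2approx L f p" and fm: "f \<in> borel_measurable borel"
    and B: "\<And>m. h2norm L (p m) \<le> B" and N: "N \<ge> 1"
  shows "norm (LINT x:{0..L}|lborel. (complex_of_real (f x))\<^sup>2 * trig_sum L N (dcoeff L (fcoeff L (\<lambda>x. complex_of_real (f x)))) x)
         \<le> (B\<^sup>2 / L + 3 / (freq L)\<^sup>2) * (B\<^sup>2 / (freq L) ^ 4 + 4 * B\<^sup>2) / (2 * real N)"
proof -
  define F where "F = (\<lambda>x. complex_of_real (f x))"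
  define g where "g = trig_sum L N (fcoeff L F)"
  define g' where "g' = trig_sum L N (dcoeff L (fcoeff L F))"
  define G where "G = (\<Sum>n\<in>{-int N..int N}. cmod (dcoeff L (fcoeff L F) n))"
  define E where "E = (LINT x:{0..L}|lborel. (cmod (F x - g x))\<^sup>2)"
  define D where "D = (LINT x:{0..L}|lborel. (cmod (F x + g x))\<^sup>2)"
  have F: "sq_integrable {0..L} F" using h2approx_sq_integrable[OF h fm, of 0] by (simp add: F_def)
  have g: "sq_integrable {0..L} g" unfolding g_def by (rule sq_integrable_trig_sum)
  have g'm: "g' \<in> borel_measurable borel"
    unfolding g'_def by (rule borel_measurable_continuous_onI, rule continuous_on_trig_sum)
  have G: "cmod (g' x) \<le> G" for x unfolding g'_def G_def by (rule norm_trig_sum_le)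
  have fsq: "(LINT x:{0..L}|lborel. (cmod (F x))\<^sup>2) = (LINT x:{0..L}|lborel. (f x)\<^sup>2)"
    by (simp add: F_def)
  txt \<open>Since \<open>g\<^sup>2 g'\<close> is a derivative of a periodic function, \<open>F\<^sup>2\<close> may be replaced by
    \<open>(F - g) (F + g)\<close>; the first factor is small by the \<open>H\<^sup>2\<close> tail bound, and the AM-GM
    weight \<open>N\<^sup>2\<close> balances its \<open>N\<^sup>-\<^sup>4\<close> decay against the \<open>O(N)\<close> growth of \<open>g'\<close>.\<close>
  have "(LINT x:{0..L}|lborel. (F x)\<^sup>2 * g' x) = (LINT x:{0..L}|lborel. ((F x)\<^sup>2 - (g x)\<^sup>2) * g' x)"
    using set_integrable_sq_mult_bounded[OF F g'm G] set_integrable_sq_mult_bounded[OF g g'm G]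
      integral_trig_sum_sq_mult_deriv[OF L, of N "fcoeff L F"]
    by (simp add: left_diff_distrib g_def g'_def)
  also have "norm \<dots> \<le> G * (((real N)\<^sup>2 * E + D / (real N)\<^sup>2) / 2)"
    unfolding E_def D_def using N by (intro norm_integral_sq_diff_mult_le[OF F g _ g'm G]) auto
  also have "\<dots> \<le> (B\<^sup>2 / L + 3 / (freq L)\<^sup>2) * (B\<^sup>2 / (freq L) ^ 4 + 4 * B\<^sup>2) / (2 * real N)"
  proof (rule flux_bound_arith[OF N L freq_pos[OF L]])
    show "0 \<le> G" "G \<le> B\<^sup>2 / L + (2 * real N + 1) / (freq L)\<^sup>2"
      unfolding G_def F_def using sum_norm_dcoeff_le[OF L h fm B] by (auto intro: sum_nonneg)
    show "0 \<le> E" "0 \<le> D" unfolding E_def D_def by (auto intro: set_integral_nonneg)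
    show "E \<le> B\<^sup>2 / (freq L * real N) ^ 4"
      using integral_norm_sq_diff_partial_sum[OF L F, of N] h2approx_tail_bound[OF L h fm B N] fsq
      unfolding E_def g_def F_def by simp
    show "D \<le> 4 * B\<^sup>2"
      using integral_norm_sq_add_partial_sum_le[OF L F, of N] h2approx_bounds(1)[OF L h fm B] fsq
      unfolding D_def g_def by simp
  qed
  finally show ?thesis unfolding F_def g'_def .
qed

lemma deriv_cmult_cos_affine: "deriv (\<lambda>x. c * cos (a * x + b)) = (\<lambda>x. (c * a) * cos (a * x + (b + pi / 2)))"
proof
  fix x
  have "((\<lambda>x. c * cos (a * x + b)) has_real_derivative c * (- sin (a * x + b) * a)) (at x)"
    by (auto intro!: derivative_eq_intros)
  hence "deriv (\<lambda>x. c * cos (a * x + b)) x = c * (- sin (a * x + b) * a)" by (rule DERIV_imp_deriv)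
  also have "\<dots> = (c * a) * (- sin (a * x + b))" by simp
  also have "- sin (a * x + b) = cos (a * x + (b + pi / 2))" using minus_sin_cos_eq[of "a * x + b"] by (simp add: add.assoc)
  finally show "deriv (\<lambda>x. c * cos (a * x + b)) x = (c * a) * cos (a * x + (b + pi / 2))" .
qed

lemma higher_deriv_cos_affine: "(deriv ^^ k) (\<lambda>x. cos (a * x + b)) = (\<lambda>x. a ^ k * cos (a * x + (b + real k * pi / 2)))"
proof (induction k)
  case 0 then show ?case by simp
next
  case (Suc k)
  have "(deriv ^^ Suc k) (\<lambda>x. cos (a * x + b)) = deriv (\<lambda>x. a ^ k * cos (a * x + (b + real k * pi / 2)))"
    using Suc by simp
  also have "\<dots> = (\<lambda>x. (a ^ k * a) * cos (a * x + ((b + real k * pi / 2) + pi / 2)))" by (rule deriv_cmult_cos_affine)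
  also have "\<dots> = (\<lambda>x. a ^ Suc k * cos (a * x + (b + real (Suc k) * pi / 2)))"
    by (simp add: algebra_simps add_divide_distrib)
  finally show ?case .
qed

lemma cos_affine_smooth:
  fixes a b :: real
  shows "\<forall>k x. ((deriv ^^ k) (\<lambda>x. cos (a * x + b))) differentiable (at x)"
proof (intro allI)
  fix k x
  have "((\<lambda>x. a ^ k * cos (a * x + (b + real k * pi / 2))) has_real_derivative
        a ^ k * (- sin (a * x + (b + real k * pi / 2)) * a)) (at x)"
    by (auto intro!: derivative_eq_intros)
  hence "(\<lambda>x. a ^ k * cos (a * x + (b + real k * pi / 2))) differentiable (at x)"
    by (auto simp: real_differentiable_def)
  thus "((deriv ^^ k) (\<lambda>x. cos (a * x + b))) differentiable (at x)"
    by (subst higher_deriv_cos_affine)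
qed

lemma cos_fmode_periodic:
  assumes L: "L > 0"
  shows "\<forall>x. cos (freq L * of_int n * (x + L) + b) = cos (freq L * of_int n * x + b)"
proof
  fix x
  have e: "freq L * of_int n * (x + L) + b = (freq L * of_int n * x + b) + (2 * pi) * of_int n"
    using L by (simp add: freq_def field_simps)
  show "cos (freq L * of_int n * (x + L) + b) = cos (freq L * of_int n * x + b)"
    unfolding e cos_add cos_int_2pin sin_int_2pin by simp
qed

lemma deriv_shift:
  fixes g :: "real \<Rightarrow> real"
  assumes d: "\<And>x. g differentiable (at x)"
  shows "deriv (\<lambda>x. g (x - c)) = (\<lambda>x. deriv g (x - c))"
proof
  fix x
  have "(g has_real_derivative deriv g (x + - c)) (at (x + - c))"
    using d by (simp add: DERIV_deriv_iff_real_differentiable real_differentiable_def differentiable_def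
        has_field_derivative_def)
       (metis DERIV_deriv_iff_real_differentiable d real_differentiable_def differentiable_def has_field_derivative_def)
  hence "((\<lambda>x. g (x + - c)) has_real_derivative deriv g (x + - c)) (at x)" by (simp only: DERIV_shift)
  hence "deriv (\<lambda>x. g (x + - c)) x = deriv g (x + - c)" by (rule DERIV_imp_deriv)
  thus "deriv (\<lambda>x. g (x - c)) x = deriv g (x - c)" by simp
qed

lemma differentiable_shift:
  fixes g :: "real \<Rightarrow> real"
  assumes d: "g differentiable (at (x - c))"
  shows "(\<lambda>x. g (x - c)) differentiable (at x)"
proof -
  have "(\<lambda>x. x - c) differentiable (at x)" by (intro derivative_intros)
  from differentiable_chain_at[OF this, of g] d show ?thesis by (simp add: o_def)
qed

lemma higher_deriv_shift:
  fixes \<phi> :: "real \<Rightarrow> real"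
  assumes sm: "\<forall>k x. ((deriv ^^ k) \<phi>) differentiable (at x)"
  shows "(deriv ^^ k) (\<lambda>x. \<phi> (x - c)) = (\<lambda>x. (deriv ^^ k) \<phi> (x - c))"
proof (induction k)
  case 0 then show ?case by simp
next
  case (Suc k)
  have "(deriv ^^ Suc k) (\<lambda>x. \<phi> (x - c)) = deriv (\<lambda>x. (deriv ^^ k) \<phi> (x - c))" using Suc by simp
  also have "\<dots> = (\<lambda>x. deriv ((deriv ^^ k) \<phi>) (x - c))" by (rule deriv_shift) (use sm in blast)
  finally show ?case by simp
qed

lemma smooth_shift:
  fixes \<phi> :: "real \<Rightarrow> real"
  assumes sm: "\<forall>k x. ((deriv ^^ k) \<phi>) differentiable (at x)"
  shows "\<forall>k x. ((deriv ^^ k) (\<lambda>x. \<phi> (x - c))) differentiable (at x)"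
  unfolding higher_deriv_shift[OF sm] using sm by (auto intro: differentiable_shift)

lemma continuous_on_higher_deriv:
  fixes \<phi> :: "real \<Rightarrow> real"
  assumes sm: "\<forall>k x. ((deriv ^^ k) \<phi>) differentiable (at x)"
  shows "continuous_on UNIV ((deriv ^^ k) \<phi>)"
  using sm by (intro continuous_at_imp_continuous_on ballI differentiable_imp_continuous_within) auto

lemma deriv_periodic:
  fixes g :: "real \<Rightarrow> real"
  assumes d: "\<And>x. g differentiable (at x)" and p: "\<And>x. g (x + L) = g x"
  shows "deriv g (x + L) = deriv g x"
proof -
  have "(g has_real_derivative deriv g (x + L)) (at (x + L))"
    using d by (metis DERIV_deriv_iff_real_differentiable real_differentiable_def differentiable_def has_field_derivative_def)
  hence "((\<lambda>x. g (x + L)) has_real_derivative deriv g (x + L)) (at x)" by (simp only: DERIV_shift)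
  hence "(g has_real_derivative deriv g (x + L)) (at x)" using p by simp
  thus ?thesis by (rule DERIV_imp_deriv[symmetric])
qed

lemma higher_deriv_periodic:
  fixes \<phi> :: "real \<Rightarrow> real"
  assumes sm: "\<forall>k x. ((deriv ^^ k) \<phi>) differentiable (at x)" and p: "\<forall>x. \<phi> (x + L) = \<phi> x"
  shows "(deriv ^^ k) \<phi> (x + L) = (deriv ^^ k) \<phi> x"
proof (induction k arbitrary: x)
  case 0 then show ?case using p by simp
next
  case (Suc k)
  show ?case using deriv_periodic[of "(deriv ^^ k) \<phi>" L x] sm Suc by simp
qed

section \<open>Translates of solutions\<close>

lemma kdv_solution_window:
  assumes sol: "kdv_solution L \<delta> u"
  shows "(\<lambda>x. u x t) \<in> borel_measurable borel" and "set_integrable lborel {a..a+L} (\<lambda>x. (u x t)\<^sup>2)"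
proof -
  have H: "H2per L (\<lambda>x. u x t)" using sol by (simp add: kdv_solution_def)
  have "sq_integrable {a..a+L} (\<lambda>x. complex_of_real (u x t))" by (rule H2per_sq_integrable[OF H])
  thus "(\<lambda>x. u x t) \<in> borel_measurable borel" and "set_integrable lborel {a..a+L} (\<lambda>x. (u x t)\<^sup>2)"
    by (simp_all add: sq_integrable_of_real)
qed

lemma kdv_solution_sq_integrable:
  assumes sol: "kdv_solution L \<delta> u"
  shows "(\<lambda>x. u x t) \<in> borel_measurable borel" and "set_integrable lborel {0..L} (\<lambda>x. (u x t)\<^sup>2)"
  using kdv_solution_window(1)[OF sol] kdv_solution_window(2)[OF sol, where t=t and a=0] by simp_all

lemma kdv_solution_sq_integrable_complex:
  assumes sol: "kdv_solution L \<delta> u"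
  shows "sq_integrable {0..L} (\<lambda>x. complex_of_real (u x t))"
  using kdv_solution_sq_integrable[OF sol, of t] by (simp add: sq_integrable_of_real)

lemma set_integral_shift_H2per:
  assumes L: "L > 0" and c: "\<bar>c\<bar> \<le> L" and f: "H2per L f"
    and h1: "continuous_on UNIV h1" "\<And>x. h1 (x + L) = h1 x"
    and h2: "continuous_on UNIV h2" "\<And>x. h2 (x + L) = h2 x"
  shows "(LINT x:{0..L}|lborel. a * (f (x + c))\<^sup>2 * h1 (x + c) + b * f (x + c) * h2 (x + c))
       = (LINT x:{0..L}|lborel. a * (f x)\<^sup>2 * h1 x + b * f x * h2 x)"
proof (rule set_integral_shift_periodic[OF L _ _ _ c, where H="\<lambda>y. a * (f y)\<^sup>2 * h1 y + b * f y * h2 y"])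
  have fm[measurable]: "f \<in> borel_measurable borel" using f by (simp add: H2per_def)
  have [measurable]: "h1 \<in> borel_measurable borel" "h2 \<in> borel_measurable borel"
    using h1(1) h2(1) by (auto intro: borel_measurable_continuous_onI)
  show "AE x in lborel. a * (f (x + L))\<^sup>2 * h1 (x + L) + b * f (x + L) * h2 (x + L)
      = a * (f x)\<^sup>2 * h1 x + b * f x * h2 x"
    using H2per_periodic[OF L f] by eventually_elim (simp add: h1(2) h2(2))
  show "(\<lambda>y. a * (f y)\<^sup>2 * h1 y + b * f y * h2 y) \<in> borel_measurable borel" by measurable
  show "set_integrable lborel {w..w+L} (\<lambda>y. a * (f y)\<^sup>2 * h1 y + b * f y * h2 y)" for w
  proof -
    have f2: "set_integrable lborel {w..w+L} (\<lambda>y. (f y)\<^sup>2)"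
      using H2per_sq_integrable[OF f, of w] by (simp add: sq_integrable_of_real)
    show ?thesis
      using set_integrable_sq_mult_continuous[OF fm f2 h1(1)] set_integrable_mult_continuous[OF fm f2 h2(1)]
      by (simp add: mult.assoc)
  qed
qed

lemma kdv_weak_form_shift:
  assumes sol: "kdv_solution L \<delta> u" and L: "L > 0" and c: "\<bar>c\<bar> \<le> L"
    and sm: "\<forall>k x. ((deriv ^^ k) \<phi>) differentiable (at x)" and per: "\<forall>x. \<phi> (x + L) = \<phi> x"
  shows "((\<lambda>s. LINT x:{0..L}|lborel. u (x + c) s * \<phi> x) has_real_derivative
          (LINT x:{0..L}|lborel. (u (x + c) t)\<^sup>2 / 2 * deriv \<phi> x + \<delta>\<^sup>2 * u (x + c) t * (deriv ^^ 3) \<phi> x)) (at t)"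
proof -
  define \<psi> where "\<psi> = (\<lambda>x. \<phi> (x - c))"
  have sm\<psi>: "\<forall>k x. ((deriv ^^ k) \<psi>) differentiable (at x)" unfolding \<psi>_def by (rule smooth_shift[OF sm])
  have per\<psi>: "\<forall>x. \<psi> (x + L) = \<psi> x" unfolding \<psi>_def using per by (metis add.commute add_diff_eq)
  have cont: "continuous_on UNIV ((deriv ^^ k) \<psi>)" for k by (rule continuous_on_higher_deriv[OF sm\<psi>])
  have perk: "(deriv ^^ k) \<psi> (x + L) = (deriv ^^ k) \<psi> x" for k x by (rule higher_deriv_periodic[OF sm\<psi> per\<psi>])
  have unshift: "(deriv ^^ k) \<psi> (x + c) = (deriv ^^ k) \<phi> x" for k x
    unfolding \<psi>_def higher_deriv_shift[OF sm] by simp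
  have H: "H2per L (\<lambda>x. u x s)" for s using sol by (simp add: kdv_solution_def)
  have "(LINT x:{0..L}|lborel. u (x + c) s * \<phi> x) = (LINT x:{0..L}|lborel. u x s * \<psi> x)" for s
    using set_integral_shift_H2per[OF L c H cont[of 0] perk[of 0] cont[of 0] perk[of 0], where a=0 and b=1] unshift[of 0] by simp
  moreover have "(LINT x:{0..L}|lborel. (u (x + c) t)\<^sup>2 / 2 * deriv \<phi> x + \<delta>\<^sup>2 * u (x + c) t * (deriv ^^ 3) \<phi> x)
      = (LINT x:{0..L}|lborel. (u x t)\<^sup>2 / 2 * deriv \<psi> x + \<delta>\<^sup>2 * u x t * (deriv ^^ 3) \<psi> x)"
    using set_integral_shift_H2per[OF L c H cont[of 1] perk[of 1] cont[of 3] perk[of 3], where a="1/2" and b="\<delta>\<^sup>2"]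
      unshift[of 1] unshift[of 3] by (simp add: field_simps)
  moreover have "((\<lambda>s. LINT x:{0..L}|lborel. u x s * \<psi> x) has_real_derivative
      (LINT x:{0..L}|lborel. (u x t)\<^sup>2 / 2 * deriv \<psi> x + \<delta>\<^sup>2 * u x t * (deriv ^^ 3) \<psi> x)) (at t)"
    using sol sm\<psi> per\<psi> unfolding kdv_solution_def by blast
  ultimately show ?thesis by simp
qed

lemma kdv_solution_shift:
  assumes sol: "kdv_solution L \<delta> u" and L: "L > 0" and c: "\<bar>c\<bar> \<le> L"
  shows "kdv_solution L \<delta> (\<lambda>x t. u (x + c) t)"
proof -
  have P1: "\<forall>t. H2per L (\<lambda>x. u (x + c) t)"
    using H2per_shift[of L "\<lambda>x. u x t" c for t] sol L by (simp add: kdv_solution_def)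
  have P2: "\<forall>T::real. \<exists>B::real. \<forall>t\<in>{-T..T}. \<exists>p. h2approx L (\<lambda>x. u (x + c) t) p \<and> (\<forall>m. h2norm L (p m) \<le> B)"
  proof
  fix T :: real
  obtain B where B: "\<forall>t\<in>{-T..T}. \<exists>p. h2approx L (\<lambda>x. u x t) p \<and> (\<forall>m. h2norm L (p m) \<le> B)"
    using sol unfolding kdv_solution_def by blast
  show "\<exists>B. \<forall>t\<in>{-T..T}. \<exists>p. h2approx L (\<lambda>x. u (x + c) t) p \<and> (\<forall>m. h2norm L (p m) \<le> B)"
  proof (rule exI[of _ B], rule ballI)
    fix t assume t: "t \<in> {-T..T}"
    obtain p where h: "h2approx L (\<lambda>x. u x t) p" and pB: "\<forall>m. h2norm L (p m) \<le> B" using B t by blast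
    have poly: "\<And>m. trig_poly L (p m)" using h by (simp add: h2approx_def)
    have m: "(\<lambda>x. u x t) \<in> borel_measurable borel" by (rule kdv_solution_window(1)[OF sol])
    have "h2approx L (\<lambda>x. u (x + c) t) (\<lambda>m x. p m (x + c))"
      using h2approx_shift[OF h m L, of c] by simp
    moreover have "\<forall>m. h2norm L (\<lambda>x. p m (x + c)) \<le> B"
      using pB h2norm_shift[OF poly L] by simp
    ultimately show "\<exists>p. h2approx L (\<lambda>x. u (x + c) t) p \<and> (\<forall>m. h2norm L (p m) \<le> B)" by blast
  qed
  qed
  show ?thesis
    unfolding kdv_solution_def using P1 P2 kdv_weak_form_shift[OF sol L c] by blast
qed

lemma kdv_solution_shift_invariant:
  assumes L: "L > 0" and c: "\<bar>c\<bar> \<le> L"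
    and unique: "\<forall>v w. kdv_solution L \<delta> v \<and> kdv_solution L \<delta> w \<and> (AE x in lborel. v x 0 = w x 0)
                    \<longrightarrow> (\<forall>t. AE x in lborel. v x t = w x t)"
    and sol: "kdv_solution L \<delta> u" and per0: "AE x in lborel. u (x + c) 0 = u x 0"
  shows "AE x in lborel. u (x + c) t = u x t"
  using unique kdv_solution_shift[OF sol L c] sol per0 by blast

section \<open>Conservation of the mean and of the \<open>L\<^sup>2\<close> norm\<close>

lemma kdv_weak_cos:
  assumes sol: "kdv_solution L \<delta> u" and L: "L > 0"
  shows "((\<lambda>s. LINT x:{0..L}|lborel. u x s * cos (freq L * of_int n * x + b)) has_real_derivative
     (LINT x:{0..L}|lborel. (u x t)\<^sup>2 / 2 * ((freq L * of_int n) * cos (freq L * of_int n * x + (b + pi / 2)))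
        + \<delta>\<^sup>2 * u x t * ((freq L * of_int n) ^ 3 * cos (freq L * of_int n * x + (b + 3 * pi / 2))))) (at t)"
proof -
  let ?a = "freq L * of_int n"
  have W: "\<forall>\<phi>::real \<Rightarrow> real. (\<forall>k x. ((deriv ^^ k) \<phi>) differentiable (at x)) \<longrightarrow> (\<forall>x. \<phi> (x + L) = \<phi> x) \<longrightarrow>
        (\<forall>t. ((\<lambda>s. LINT x:{0..L}|lborel. u x s * \<phi> x) has_real_derivative
               (LINT x:{0..L}|lborel. (u x t)\<^sup>2 / 2 * deriv \<phi> x + \<delta>\<^sup>2 * u x t * (deriv ^^ 3) \<phi> x)) (at t))"
    using sol by (simp add: kdv_solution_def)
  have D: "((\<lambda>s. LINT x:{0..L}|lborel. u x s * cos (?a * x + b)) has_real_derivative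
               (LINT x:{0..L}|lborel. (u x t)\<^sup>2 / 2 * deriv (\<lambda>x. cos (?a * x + b)) x + \<delta>\<^sup>2 * u x t * (deriv ^^ 3) (\<lambda>x. cos (?a * x + b)) x)) (at t)"
  proof -
    have s1: "\<forall>k x. ((deriv ^^ k) (\<lambda>x. cos (?a * x + b))) differentiable (at x)" by (rule cos_affine_smooth)
    have s2: "\<forall>x. (\<lambda>x. cos (?a * x + b)) (x + L) = (\<lambda>x. cos (?a * x + b)) x"
      using cos_fmode_periodic[OF L] by simp
    show ?thesis using W[rule_format, of "\<lambda>x. cos (?a * x + b)", OF s1[rule_format] s2[rule_format]] by simp
  qed
  have d1: "deriv (\<lambda>x. cos (?a * x + b)) = (\<lambda>x. ?a * cos (?a * x + (b + pi / 2)))"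
    using higher_deriv_cos_affine[of 1 ?a b] by simp
  have d3: "(deriv ^^ 3) (\<lambda>x. cos (?a * x + b)) = (\<lambda>x. ?a ^ 3 * cos (?a * x + (b + 3 * pi / 2)))"
    using higher_deriv_cos_affine[of 3 ?a b] by simp
  show ?thesis using D unfolding d1 d3 .
qed

definition cos_moment :: "real \<Rightarrow> (real \<Rightarrow> real \<Rightarrow> real) \<Rightarrow> int \<Rightarrow> real \<Rightarrow> real" where
  "cos_moment L u n t = (LINT x:{0..L}|lborel. u x t * cos (freq L * of_int n * x))"

definition sin_moment :: "real \<Rightarrow> (real \<Rightarrow> real \<Rightarrow> real) \<Rightarrow> int \<Rightarrow> real \<Rightarrow> real" where
  "sin_moment L u n t = (LINT x:{0..L}|lborel. u x t * sin (freq L * of_int n * x))"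

definition cos_moment_sq :: "real \<Rightarrow> (real \<Rightarrow> real \<Rightarrow> real) \<Rightarrow> int \<Rightarrow> real \<Rightarrow> real" where
  "cos_moment_sq L u n t = (LINT x:{0..L}|lborel. (u x t)\<^sup>2 * cos (freq L * of_int n * x))"

definition sin_moment_sq :: "real \<Rightarrow> (real \<Rightarrow> real \<Rightarrow> real) \<Rightarrow> int \<Rightarrow> real \<Rightarrow> real" where
  "sin_moment_sq L u n t = (LINT x:{0..L}|lborel. (u x t)\<^sup>2 * sin (freq L * of_int n * x))"

lemma cos_moment_has_derivative:
  assumes sol: "kdv_solution L \<delta> u" and L: "L > 0"
  shows "(cos_moment L u n has_real_derivative (- (freq L * of_int n / 2) * sin_moment_sq L u n t + \<delta>\<^sup>2 * (freq L * of_int n) ^ 3 * sin_moment L u n t)) (at t)"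
proof -
  let ?a = "freq L * of_int n"
  have m: "(\<lambda>x. u x t) \<in> borel_measurable borel" and q: "set_integrable lborel {0..L} (\<lambda>x. (u x t)\<^sup>2)"
    using kdv_solution_sq_integrable[OF sol] by auto
  have i1: "set_integrable lborel {0..L} (\<lambda>x. (u x t)\<^sup>2 * sin (?a * x))"
    by (rule set_integrable_sq_mult_continuous[OF m q]) (intro continuous_intros)
  have i2: "set_integrable lborel {0..L} (\<lambda>x. u x t * sin (?a * x))"
    by (rule set_integrable_mult_continuous[OF m q]) (intro continuous_intros)
  have D: "((\<lambda>s. LINT x:{0..L}|lborel. u x s * cos (?a * x + 0)) has_real_derivative
     (LINT x:{0..L}|lborel. (u x t)\<^sup>2 / 2 * (?a * cos (?a * x + (0 + pi / 2)))
        + \<delta>\<^sup>2 * u x t * (?a ^ 3 * cos (?a * x + (0 + 3 * pi / 2))))) (at t)"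
    by (rule kdv_weak_cos[OF sol L])
  have e: "(LINT x:{0..L}|lborel. (u x t)\<^sup>2 / 2 * (?a * cos (?a * x + (0 + pi / 2)))
        + \<delta>\<^sup>2 * u x t * (?a ^ 3 * cos (?a * x + (0 + 3 * pi / 2))))
      = (LINT x:{0..L}|lborel. (- (?a / 2)) * ((u x t)\<^sup>2 * sin (?a * x)) + (\<delta>\<^sup>2 * ?a ^ 3) * (u x t * sin (?a * x)))"
  proof -
    have c1: "cos (y + pi / 2) = - sin y" for y by (simp add: cos_add)
    have c3: "cos (y + 3 * pi / 2) = sin y" for y
    proof -
      have "y + 3 * pi / 2 = (y + pi / 2) + pi" by simp
      thus ?thesis by (simp only: cos_periodic_pi c1)
    qed
    show ?thesis by (simp only: add_0_left c1 c3) (simp add: algebra_simps)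
  qed
  have "(LINT x:{0..L}|lborel. (- (?a / 2)) * ((u x t)\<^sup>2 * sin (?a * x)) + (\<delta>\<^sup>2 * ?a ^ 3) * (u x t * sin (?a * x)))
      = - (?a / 2) * sin_moment_sq L u n t + \<delta>\<^sup>2 * ?a ^ 3 * sin_moment L u n t"
    unfolding sin_moment_sq_def sin_moment_def by (subst set_integral_lin_comb[OF i1 i2]) (simp add: mult.assoc)
  moreover have "cos_moment L u n = (\<lambda>s. LINT x:{0..L}|lborel. u x s * cos (?a * x + 0))"
    by (rule ext) (simp add: cos_moment_def)
  ultimately show ?thesis using D e by simp
qed

lemma sin_moment_has_derivative:
  assumes sol: "kdv_solution L \<delta> u" and L: "L > 0"
  shows "(sin_moment L u n has_real_derivative ((freq L * of_int n / 2) * cos_moment_sq L u n t - \<delta>\<^sup>2 * (freq L * of_int n) ^ 3 * cos_moment L u n t)) (at t)"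
proof -
  let ?a = "freq L * of_int n"
  have m: "(\<lambda>x. u x t) \<in> borel_measurable borel" and q: "set_integrable lborel {0..L} (\<lambda>x. (u x t)\<^sup>2)"
    using kdv_solution_sq_integrable[OF sol] by auto
  have i1: "set_integrable lborel {0..L} (\<lambda>x. (u x t)\<^sup>2 * cos (?a * x))"
    by (rule set_integrable_sq_mult_continuous[OF m q]) (intro continuous_intros)
  have i2: "set_integrable lborel {0..L} (\<lambda>x. u x t * cos (?a * x))"
    by (rule set_integrable_mult_continuous[OF m q]) (intro continuous_intros)
  have D: "((\<lambda>s. LINT x:{0..L}|lborel. u x s * cos (?a * x + (- pi / 2))) has_real_derivative
     (LINT x:{0..L}|lborel. (u x t)\<^sup>2 / 2 * (?a * cos (?a * x + (- pi / 2 + pi / 2)))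
        + \<delta>\<^sup>2 * u x t * (?a ^ 3 * cos (?a * x + (- pi / 2 + 3 * pi / 2))))) (at t)"
    by (rule kdv_weak_cos[OF sol L])
  have c0: "cos (y + (- pi / 2)) = sin y" for y by (simp add: cos_diff)
  have e: "(LINT x:{0..L}|lborel. (u x t)\<^sup>2 / 2 * (?a * cos (?a * x + (- pi / 2 + pi / 2)))
        + \<delta>\<^sup>2 * u x t * (?a ^ 3 * cos (?a * x + (- pi / 2 + 3 * pi / 2))))
      = (LINT x:{0..L}|lborel. (?a / 2) * ((u x t)\<^sup>2 * cos (?a * x)) + (- (\<delta>\<^sup>2 * ?a ^ 3)) * (u x t * cos (?a * x)))"
  proof -
    have h1: "- pi / 2 + pi / 2 = 0" and h3: "- pi / 2 + 3 * pi / 2 = pi" by simp_all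
    show ?thesis by (simp only: h1 h3 add_0_right cos_periodic_pi) (simp add: algebra_simps)
  qed
  have "(LINT x:{0..L}|lborel. (?a / 2) * ((u x t)\<^sup>2 * cos (?a * x)) + (- (\<delta>\<^sup>2 * ?a ^ 3)) * (u x t * cos (?a * x)))
      = (?a / 2) * cos_moment_sq L u n t - \<delta>\<^sup>2 * ?a ^ 3 * cos_moment L u n t"
    unfolding cos_moment_sq_def cos_moment_def by (subst set_integral_lin_comb[OF i1 i2]) (simp add: mult.assoc)
  moreover have "sin_moment L u n = (\<lambda>s. LINT x:{0..L}|lborel. u x s * cos (?a * x + (- pi / 2)))"
    by (rule ext) (simp only: sin_moment_def c0)
  ultimately show ?thesis using D e by simp
qed

lemma kdv_mean_conserved:
  assumes sol: "kdv_solution L \<delta> u" and L: "L > 0"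
  shows "(LINT x:{0..L}|lborel. u x t) = (LINT x:{0..L}|lborel. u x 0)"
proof -
  have "\<forall>s. (cos_moment L u 0 has_real_derivative 0) (at s)"
    using cos_moment_has_derivative[OF sol L, of 0] by simp
  hence "cos_moment L u 0 t = cos_moment L u 0 0" by (rule DERIV_isconst_all)
  thus ?thesis by (simp add: cos_moment_def)
qed

lemma kdv_low_modes_vanish:
  assumes L: "L > 0" and k: "k \<noteq> 0" and sol: "kdv_solution L \<delta> u"
    and per: "AE x in lborel. u (x + L / of_int k) t = u x t"
    and mean: "(LINT x:{0..L}|lborel. u x 0) = 0" and nk: "\<bar>n\<bar> < \<bar>k\<bar>"
  shows "fourier_coeff L (\<lambda>x. u x t) n = 0"
proof (cases "n = 0")
  case True
  then show ?thesis
    using kdv_mean_conserved[OF sol L, of t] mean by (simp add: fourier_coeff_0)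
next
  case False
  have "H2per L (\<lambda>x. u x t)" using sol by (simp add: kdv_solution_def)
  from fourier_coeff_shift_periodic[OF L this k per False nk] show ?thesis .
qed

lemma fcoeff_eq_moments:
  assumes sol: "kdv_solution L \<delta> u" and L: "L > 0"
  shows "complex_of_real L * fcoeff L (\<lambda>x. complex_of_real (u x t)) n = complex_of_real (cos_moment L u n t) - \<i> * complex_of_real (sin_moment L u n t)"
proof -
  let ?a = "freq L * of_int n"
  have F: "sq_integrable {0..L} (\<lambda>x. complex_of_real (u x t))" by (rule kdv_solution_sq_integrable_complex[OF sol])
  have i1: "set_integrable lborel {0..L} (\<lambda>x. complex_of_real (u x t) * complex_of_real (cos (?a * x)))"
    by (rule set_integrable_mult_sq_integrable[OF F sq_integrable_cos]) auto
  have i2: "set_integrable lborel {0..L} (\<lambda>x. \<i> * (complex_of_real (u x t) * complex_of_real (sin (?a * x))))"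
    by (rule set_integrable_mult_right, rule set_integrable_mult_sq_integrable[OF F sq_integrable_sin]) auto
  have "(LINT x:{0..L}|lborel. complex_of_real (u x t) * cnj (fmode L n x))
      = (LINT x:{0..L}|lborel. complex_of_real (u x t) * complex_of_real (cos (?a * x)) - \<i> * (complex_of_real (u x t) * complex_of_real (sin (?a * x))))"
    unfolding cnj_fmode_cos_sin by (simp add: algebra_simps)
  also have "\<dots> = (LINT x:{0..L}|lborel. complex_of_real (u x t * cos (?a * x))) - \<i> * (LINT x:{0..L}|lborel. complex_of_real (u x t * sin (?a * x)))"
    using set_integral_diff(2)[OF i1 i2] by (simp add: set_integral_mult_right)
  also have "\<dots> = complex_of_real (cos_moment L u n t) - \<i> * complex_of_real (sin_moment L u n t)"
    unfolding cos_moment_def sin_moment_def set_integral_complex_of_real ..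
  finally show ?thesis using L by (simp add: fcoeff_def)
qed

lemma integral_sq_mult_fmode_eq_moments:
  assumes sol: "kdv_solution L \<delta> u" and L: "L > 0"
  shows "(LINT x:{0..L}|lborel. (complex_of_real (u x t))\<^sup>2 * fmode L n x) = complex_of_real (cos_moment_sq L u n t) + \<i> * complex_of_real (sin_moment_sq L u n t)"
proof -
  let ?a = "freq L * of_int n"
  have F: "sq_integrable {0..L} (\<lambda>x. complex_of_real (u x t))" by (rule kdv_solution_sq_integrable_complex[OF sol])
  have Fc: "sq_integrable {0..L} (\<lambda>x. complex_of_real (cos (?a * x)) * complex_of_real (u x t))"
    by (rule sq_integrable_mult_bounded[OF F, of _ 1]) (auto intro: borel_measurable_continuous_onI continuous_intros)
  have Fs: "sq_integrable {0..L} (\<lambda>x. complex_of_real (sin (?a * x)) * complex_of_real (u x t))"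
    by (rule sq_integrable_mult_bounded[OF F, of _ 1]) (auto intro: borel_measurable_continuous_onI continuous_intros)
  have i1: "set_integrable lborel {0..L} (\<lambda>x. complex_of_real ((u x t)\<^sup>2 * cos (?a * x)))"
    using set_integrable_mult_sq_integrable[OF F Fc] by (simp add: power2_eq_square algebra_simps)
  have i2: "set_integrable lborel {0..L} (\<lambda>x. \<i> * complex_of_real ((u x t)\<^sup>2 * sin (?a * x)))"
    using set_integrable_mult_right[OF set_integrable_mult_sq_integrable[OF F Fs], of \<i>] by (simp add: power2_eq_square algebra_simps)
  have "(LINT x:{0..L}|lborel. (complex_of_real (u x t))\<^sup>2 * fmode L n x)
      = (LINT x:{0..L}|lborel. complex_of_real ((u x t)\<^sup>2 * cos (?a * x)) + \<i> * complex_of_real ((u x t)\<^sup>2 * sin (?a * x)))"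
    unfolding fmode_cos_sin by (simp add: algebra_simps)
  also have "\<dots> = complex_of_real (cos_moment_sq L u n t) + \<i> * complex_of_real (sin_moment_sq L u n t)"
    using set_integral_add(2)[OF i1 i2] unfolding cos_moment_sq_def sin_moment_sq_def set_integral_complex_of_real[symmetric]
    by (simp add: set_integral_mult_right)
  finally show ?thesis .
qed

definition partial_energy :: "real \<Rightarrow> (real \<Rightarrow> real \<Rightarrow> real) \<Rightarrow> nat \<Rightarrow> real \<Rightarrow> real" where
  "partial_energy L u N t = (\<Sum>n\<in>{-int N..int N}.
     (cos_moment L u n t * cos_moment L u n t + sin_moment L u n t * sin_moment L u n t) / L\<^sup>2)"

definition energy_flux :: "real \<Rightarrow> (real \<Rightarrow> real \<Rightarrow> real) \<Rightarrow> nat \<Rightarrow> real \<Rightarrow> real" where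
  "energy_flux L u N t = (\<Sum>n\<in>{-int N..int N}.
     (freq L * of_int n / L\<^sup>2) * (sin_moment L u n t * cos_moment_sq L u n t - cos_moment L u n t * sin_moment_sq L u n t))"

lemma partial_energy_eq:
  assumes sol: "kdv_solution L \<delta> u" and L: "L > 0"
  shows "L * partial_energy L u N t = L * (\<Sum>n\<in>{-int N..int N}. (cmod (fcoeff L (\<lambda>x. complex_of_real (u x t)) n))\<^sup>2)"
proof -
  have "(cmod (fcoeff L (\<lambda>x. complex_of_real (u x t)) n))\<^sup>2 = (cos_moment L u n t * cos_moment L u n t + sin_moment L u n t * sin_moment L u n t) / L\<^sup>2" for n
  proof -
    have "fcoeff L (\<lambda>x. complex_of_real (u x t)) n = (complex_of_real (cos_moment L u n t) - \<i> * complex_of_real (sin_moment L u n t)) / complex_of_real L"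
      using fcoeff_eq_moments[OF sol L, of t n] L by (simp add: field_simps)
    moreover have "(cmod (complex_of_real (cos_moment L u n t) - \<i> * complex_of_real (sin_moment L u n t)))\<^sup>2 = cos_moment L u n t * cos_moment L u n t + sin_moment L u n t * sin_moment L u n t"
      by (simp only: cmod_power2) (simp add: power2_eq_square)
    ultimately show ?thesis using L by (simp add: norm_divide power_divide)
  qed
  thus ?thesis unfolding partial_energy_def by simp
qed

lemma partial_energy_has_derivative:
  assumes sol: "kdv_solution L \<delta> u" and L: "L > 0"
  shows "(partial_energy L u N has_real_derivative energy_flux L u N t) (at t)"
proof -
  let ?C' = "\<lambda>n. - (freq L * of_int n / 2) * sin_moment_sq L u n t + \<delta>\<^sup>2 * (freq L * of_int n) ^ 3 * sin_moment L u n t"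
  let ?S' = "\<lambda>n. (freq L * of_int n / 2) * cos_moment_sq L u n t - \<delta>\<^sup>2 * (freq L * of_int n) ^ 3 * cos_moment L u n t"
  have "((\<lambda>t. \<Sum>n\<in>{-int N..int N}. (cos_moment L u n t * cos_moment L u n t + sin_moment L u n t * sin_moment L u n t) / L\<^sup>2) has_real_derivative
      (\<Sum>n\<in>{-int N..int N}. ((cos_moment L u n t * ?C' n + ?C' n * cos_moment L u n t) + (sin_moment L u n t * ?S' n + ?S' n * sin_moment L u n t)) / L\<^sup>2)) (at t)"
    by (intro DERIV_sum DERIV_cdivide DERIV_add DERIV_mult' cos_moment_has_derivative[OF sol L] sin_moment_has_derivative[OF sol L])
  moreover have "(\<Sum>n\<in>{-int N..int N}. ((cos_moment L u n t * ?C' n + ?C' n * cos_moment L u n t) + (sin_moment L u n t * ?S' n + ?S' n * sin_moment L u n t)) / L\<^sup>2)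
      = energy_flux L u N t"
    unfolding energy_flux_def using L by (intro sum.cong refl) (simp add: field_simps)
  ultimately show ?thesis unfolding partial_energy_def[abs_def] by simp
qed

lemma energy_flux_eq:
  assumes sol: "kdv_solution L \<delta> u" and L: "L > 0"
  shows "Re (LINT x:{0..L}|lborel. (complex_of_real (u x t))\<^sup>2 * trig_sum L N (dcoeff L (fcoeff L (\<lambda>x. complex_of_real (u x t)))) x) / L
    = energy_flux L u N t"
proof -
  let ?F = "\<lambda>x. complex_of_real (u x t)"
  let ?a = "fcoeff L ?F"
  have F: "sq_integrable {0..L} ?F" by (rule kdv_solution_sq_integrable_complex[OF sol])
  have int: "set_integrable lborel {0..L} (\<lambda>x. dcoeff L ?a n * ((?F x)\<^sup>2 * fmode L n x))" for n
  proof -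
    have "sq_integrable {0..L} (\<lambda>x. fmode L n x * ?F x)" by (rule sq_integrable_mult_bounded[OF F fmode_measurable, where C=1]) auto
    from set_integrable_mult_sq_integrable[OF F this] show ?thesis
      by (intro set_integrable_mult_right) (simp add: power2_eq_square algebra_simps)
  qed
  have "(LINT x:{0..L}|lborel. (?F x)\<^sup>2 * trig_sum L N (dcoeff L ?a) x)
      = (LINT x:{0..L}|lborel. (\<Sum>n\<in>{-int N..int N}. dcoeff L ?a n * ((?F x)\<^sup>2 * fmode L n x)))"
    unfolding trig_sum_def by (simp add: sum_distrib_left algebra_simps)
  also have "\<dots> = (\<Sum>n\<in>{-int N..int N}. dcoeff L ?a n * (LINT x:{0..L}|lborel. (?F x)\<^sup>2 * fmode L n x))"
    by (subst set_integral_sum) (auto intro: int simp: set_integral_mult_right)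
  also have "\<dots> = (\<Sum>n\<in>{-int N..int N}. dcoeff L ?a n * (complex_of_real (cos_moment_sq L u n t) + \<i> * complex_of_real (sin_moment_sq L u n t)))"
    by (simp add: integral_sq_mult_fmode_eq_moments[OF sol L])
  finally have e: "(LINT x:{0..L}|lborel. (?F x)\<^sup>2 * trig_sum L N (dcoeff L ?a) x) = \<dots>" .
  have "Re (dcoeff L ?a n * (complex_of_real (cos_moment_sq L u n t) + \<i> * complex_of_real (sin_moment_sq L u n t))) / L
      = (freq L * of_int n / L\<^sup>2) * (sin_moment L u n t * cos_moment_sq L u n t - cos_moment L u n t * sin_moment_sq L u n t)" for n
  proof -
    have an: "?a n = (complex_of_real (cos_moment L u n t) - \<i> * complex_of_real (sin_moment L u n t)) / complex_of_real L"
      using fcoeff_eq_moments[OF sol L, of t n] L by (simp add: field_simps)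
    show ?thesis unfolding dcoeff_def an using L by (simp add: field_simps power2_eq_square)
  qed
  thus ?thesis unfolding e Re_sum sum_divide_distrib energy_flux_def by simp
qed

lemma energy_flux_bound:
  assumes sol: "kdv_solution L \<delta> u" and L: "L > 0" and N: "N \<ge> 1"
    and h: "h2approx L (\<lambda>x. u x t) p" and B: "\<And>m. h2norm L (p m) \<le> B"
  shows "\<bar>energy_flux L u N t\<bar>
    \<le> (B\<^sup>2 / L + 3 / (freq L)\<^sup>2) * (B\<^sup>2 / (freq L) ^ 4 + 4 * B\<^sup>2) / (2 * real N) / L"
proof -
  let ?z = "LINT x:{0..L}|lborel. (complex_of_real (u x t))\<^sup>2
    * trig_sum L N (dcoeff L (fcoeff L (\<lambda>x. complex_of_real (u x t)))) x"
  have "\<bar>energy_flux L u N t\<bar> = \<bar>Re ?z\<bar> / L"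
    using L by (simp flip: energy_flux_eq[OF sol L])
  also have "\<dots> \<le> norm ?z / L" using L by (intro divide_right_mono abs_Re_le_cmod) auto
  also have "\<dots> \<le> (B\<^sup>2 / L + 3 / (freq L)\<^sup>2) * (B\<^sup>2 / (freq L) ^ 4 + 4 * B\<^sup>2) / (2 * real N) / L"
    using nonlinear_flux_bound[OF L h kdv_solution_window(1)[OF sol] B N] L by (intro divide_right_mono) auto
  finally show ?thesis .
qed

lemma partial_energy_tendsto:
  assumes sol: "kdv_solution L \<delta> u" and L: "L > 0"
  shows "(\<lambda>N. L * partial_energy L u N t) \<longlonglongrightarrow> (LINT x:{0..L}|lborel. (u x t)\<^sup>2)"
proof -
  have H: "H2per L (\<lambda>x. u x t)" using sol by (simp add: kdv_solution_def)
  then obtain p where h: "h2approx L (\<lambda>x. u x t) p" and m: "(\<lambda>x. u x t) \<in> borel_measurable borel"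
    unfolding H2per_def by blast
  show ?thesis unfolding partial_energy_eq[OF sol L] by (rule parseval_h2approx[OF L h m])
qed

lemma abs_diff_le_by_derivative_bound:
  fixes f f' :: "real \<Rightarrow> real"
  assumes D: "\<And>x. (f has_real_derivative f' x) (at x)" and M: "\<And>x. \<bar>x\<bar> \<le> \<bar>t\<bar> \<Longrightarrow> \<bar>f' x\<bar> \<le> M"
  shows "\<bar>f t - f 0\<bar> \<le> \<bar>t\<bar> * M"
proof (cases t "0::real" rule: linorder_cases)
  case less
  obtain z where z: "t < z" "z < 0" "f 0 - f t = (0 - t) * f' z"
    using MVT2[OF less, of f f'] D by blast
  have "\<bar>f' z\<bar> \<le> M" using z less by (intro M) auto
  thus ?thesis using z less by (simp add: abs_mult abs_minus_commute)
next
  case equal then show ?thesis using M[of 0] by simp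
next
  case greater
  obtain z where z: "0 < z" "z < t" "f t - f 0 = (t - 0) * f' z"
    using MVT2[OF greater, of f f'] D by blast
  have "\<bar>f' z\<bar> \<le> M" using z greater by (intro M) auto
  thus ?thesis using z greater by (simp add: abs_mult)
qed

lemma kdv_L2_conserved:
  assumes sol: "kdv_solution L \<delta> u" and L: "L > 0"
  shows "(LINT x:{0..L}|lborel. (u x t)\<^sup>2) = (LINT x:{0..L}|lborel. (u x 0)\<^sup>2)"
proof -
  obtain B where B: "\<forall>s\<in>{-\<bar>t\<bar>..\<bar>t\<bar>}. \<exists>p. h2approx L (\<lambda>x. u x s) p \<and> (\<forall>m. h2norm L (p m) \<le> B)"
    using sol unfolding kdv_solution_def by blast
  define X where "X = (B\<^sup>2 / L + 3 / (freq L)\<^sup>2) * (B\<^sup>2 / (freq L) ^ 4 + 4 * B\<^sup>2)"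
  have diff: "\<bar>L * partial_energy L u N t - L * partial_energy L u N 0\<bar> \<le> \<bar>t\<bar> * X / (2 * real N)"
    if N: "N \<ge> 1" for N
  proof -
    have "\<bar>partial_energy L u N t - partial_energy L u N 0\<bar> \<le> \<bar>t\<bar> * (X / (2 * real N) / L)"
    proof (rule abs_diff_le_by_derivative_bound)
      show "(partial_energy L u N has_real_derivative energy_flux L u N s) (at s)" for s
        by (rule partial_energy_has_derivative[OF sol L])
      show "\<bar>energy_flux L u N s\<bar> \<le> X / (2 * real N) / L" if "\<bar>s\<bar> \<le> \<bar>t\<bar>" for s
        using B that energy_flux_bound[OF sol L N] unfolding X_def by force
    qed
    hence "L * \<bar>partial_energy L u N t - partial_energy L u N 0\<bar> \<le> L * (\<bar>t\<bar> * (X / (2 * real N) / L))"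
      using L by (intro mult_left_mono) auto
    thus ?thesis using L by (simp add: abs_mult right_diff_distrib[symmetric])
  qed
  have "(\<lambda>N. L * partial_energy L u N t - L * partial_energy L u N 0)
      \<longlonglongrightarrow> (LINT x:{0..L}|lborel. (u x t)\<^sup>2) - (LINT x:{0..L}|lborel. (u x 0)\<^sup>2)"
    by (intro tendsto_diff partial_energy_tendsto[OF sol L])
  moreover have "(\<lambda>N. L * partial_energy L u N t - L * partial_energy L u N 0) \<longlonglongrightarrow> 0"
  proof (rule Lim_null_comparison)
    show "\<forall>\<^sub>F N in sequentially. norm (L * partial_energy L u N t - L * partial_energy L u N 0) \<le> \<bar>t\<bar> * X / (2 * real N)"
      using eventually_ge_at_top[of 1] by eventually_elim (use diff in auto)
    have "(\<lambda>N. \<bar>t\<bar> * X / 2 * inverse (real N)) \<longlonglongrightarrow> \<bar>t\<bar> * X / 2 * 0"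
      by (intro tendsto_mult tendsto_const tendsto_inverse_0_at_top filterlim_real_sequentially)
    then show "(\<lambda>N. \<bar>t\<bar> * X / (2 * real N)) \<longlonglongrightarrow> 0" by (simp add: field_simps)
  qed
  ultimately show ?thesis using LIMSEQ_unique by fastforce
qed

lemma kdv_l2norm_conserved:
  assumes sol: "kdv_solution L \<delta> u" and L: "L > 0"
    and f: "f \<in> borel_measurable borel" and init: "AE x in lborel. u x 0 = f x"
  shows "l2norm L (\<lambda>x. u x t) = l2norm L f"
proof -
  have [measurable]: "(\<lambda>x. u x 0) \<in> borel_measurable borel" "f \<in> borel_measurable borel"
    using kdv_solution_window(1)[OF sol] f by auto
  have "(LINT x:{0..L}|lborel. (u x 0)\<^sup>2) = (LINT x:{0..L}|lborel. (f x)\<^sup>2)"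
    by (rule set_integral_cong_AE) (use init in \<open>auto elim!: AE_mp\<close>)
  then show ?thesis
    unfolding l2norm_def kdv_L2_conserved[OF sol L, of t] by simp
qed

lemma kdv_shift_periodic_solution:
  assumes L: "L > 0" and k: "k \<noteq> 0"
    and unique: "\<forall>v w. kdv_solution L \<delta> v \<and> kdv_solution L \<delta> w \<and> (AE x in lborel. v x 0 = w x 0)
                    \<longrightarrow> (\<forall>t. AE x in lborel. v x t = w x t)"
    and sol: "kdv_solution L \<delta> u" and init: "AE x in lborel. u x 0 = f x"
    and f: "f \<in> borel_measurable borel" and mean: "(LINT x:{0..L}|lborel. f x) = 0"
    and per: "AE x in lborel. f (x + L / of_int k) = f x"
  shows "AE x in lborel. u (x + L / of_int k) t = u x t"
    and "int M < \<bar>k\<bar> \<Longrightarrow> proj L M (\<lambda>x. u x t) = (\<lambda>x. 0)"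
    and "l2norm L (\<lambda>x. u x t) = l2norm L f"
proof -
  have um: "(\<lambda>x. u x s) \<in> borel_measurable borel" for s by (rule kdv_solution_window(1)[OF sol])
  have shift: "AE x in lborel. u (x + L / of_int k) s = u x s" for s
    using kdv_solution_shift_invariant[OF L abs_divide_of_int_le[OF L k] unique sol
        AE_shift_periodic_cong[OF um f init per]] .
  then show "AE x in lborel. u (x + L / of_int k) t = u x t" .
  have "(LINT x:{0..L}|lborel. u x 0) = 0"
    using set_integral_cong_AE[OF um f init] mean by simp
  then show "proj L M (\<lambda>x. u x t) = (\<lambda>x. 0)" if "int M < \<bar>k\<bar>"
    using that by (intro proj_eq_0 kdv_low_modes_vanish[OF L k sol shift]) auto
  show "l2norm L (\<lambda>x. u x t) = l2norm L f" by (rule kdv_l2norm_conserved[OF sol L f init])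
qed


theorem proposition3p5:
  fixes L \<delta> :: real and k :: int
    and uin1 uin2 :: "real \<Rightarrow> real" and u1 u2 :: "real \<Rightarrow> real \<Rightarrow> real"
  assumes L_pos: "L > 0"
    and k_nz: "k \<noteq> 0"
    and well_posed: "\<forall>v w. kdv_solution L \<delta> v \<and> kdv_solution L \<delta> w \<and> (AE x in lborel. v x 0 = w x 0)
                        \<longrightarrow> (\<forall>t. AE x in lborel. v x t = w x t)"
    and H2_1: "H2per L uin1" and H2_2: "H2per L uin2"
    and mean_1: "(LINT x:{0..L}|lborel. uin1 x) = 0"
    and mean_2: "(LINT x:{0..L}|lborel. uin2 x) = 0"
    and per_1: "AE x in lborel. uin1 (x + L / of_int k) = uin1 x"
    and per_2: "AE x in lborel. uin2 (x + L / of_int k) = uin2 x"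
    and norms: "l2norm L uin1 \<noteq> l2norm L uin2"
    and sol_1: "kdv_solution L \<delta> u1" and init_1: "AE x in lborel. u1 x 0 = uin1 x"
    and sol_2: "kdv_solution L \<delta> u2" and init_2: "AE x in lborel. u2 x 0 = uin2 x"
  shows "(\<forall>t. AE x in lborel. u1 (x + L / of_int k) t = u1 x t) \<and>
         (\<forall>t. AE x in lborel. u2 (x + L / of_int k) t = u2 x t) \<and>
         (\<forall>M::nat. 0 < M \<and> int M < \<bar>k\<bar> \<longrightarrow>
             (\<forall>t. proj L M (\<lambda>x. u1 x t) = proj L M (\<lambda>x. u2 x t))) \<and>
         Limsup at_top (\<lambda>t. ereal (l2norm L (\<lambda>x. u1 x t - u2 x t))) > 0"
proof -
  have f: "uin1 \<in> borel_measurable borel" "uin2 \<in> borel_measurable borel"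
    using H2_1 H2_2 by (auto simp: H2per_def)
  note u1 = kdv_shift_periodic_solution[OF L_pos k_nz well_posed sol_1 init_1 f(1) mean_1 per_1]
  note u2 = kdv_shift_periodic_solution[OF L_pos k_nz well_posed sol_2 init_2 f(2) mean_2 per_2]
  have "\<bar>l2norm L uin1 - l2norm L uin2\<bar> \<le> l2norm L (\<lambda>x. u1 x t - u2 x t)" for t
    using l2norm_diff_ge[OF kdv_solution_sq_integrable[OF sol_1] kdv_solution_sq_integrable[OF sol_2]]
    unfolding u1(3) u2(3) .
  hence "ereal \<bar>l2norm L uin1 - l2norm L uin2\<bar> \<le> Limsup at_top (\<lambda>t. ereal (l2norm L (\<lambda>x. u1 x t - u2 x t)))"
    by (intro le_Limsup) auto
  then show ?thesis
    using u1(1,2) u2(1,2) norms by (auto intro: less_le_trans[rotated])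
qed


end
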